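(* Let $A$ be a commutative DGA and $\lambda=(0\to Z\to\widetilde L\xrightarrow{\pi}L\to0,\ Z\cong\mathbb{Q}[q])$ an MC-product data. Let $\alpha\in A^+\otimes L$ be a Maurer–Cartan element. Let $\tilde\alpha,\tilde\alpha_1\in A^+\otimes\widetilde L$ be two degree-one lifts of $\alpha$. Then $F(\tilde\alpha)$ and $F(\tilde\alpha_1)$, viewed as cocycles in $A^+\otimes Z\cong A^+[q]$, define the same cohomology class in $H^{2-q}(A)$. That is, this class depends only on $\alpha$.
   Context: All algebras are over $\mathbb{Q}$. A commutative DGA $(A,d)$ is a graded-commutative algebra $A=\bigoplus_{i\ge0}A^i$ with a degree $+1$ derivation $d$, $d^2=0$; $A^+=\bigoplus_{i>0}A^i$. A DGLA is a graded Lie algebra with a degree $+1$ differential which is a derivation. It is nilpotent if its lower central series terminates at $0$. For a DGLA $(L,d_L)$, $A\otimes L$ is the DGLA with total grading, bracket $[b_1\otimes w_1,b_2\otimes w_2]=(-1)^{|w_1||b_2|}b_1b_2\otimes[w_1,w_2]$ and differential $d(b\otimes w)=d_Ab\otimes w+(-1)^{|b|}b\otimes d_Lw$. For degree-one $\alpha$, $F(\alpha)=d\alpha+\tfrac12[\alpha,\alpha]$; $\alpha$ is Maurer–Cartan if $F(\alpha)=0$. An MC-product data consists of: - a central extension $0\to Z\to\widetilde L\xrightarrow{\pi}L\to0$ of nilpotent DGLAs (differentials $\tilde d_L$, $d_L$) concentrated in nonpositive degrees, with $Z\subseteq\ker\tilde d_L$ and $\operatorname{Im}\tilde d_L\cap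 Z=0$; - an isomorphism $Z\cong\mathbb{Q}[q]$ ($q\le0$). For a lift $\tilde\alpha$ of an MC element, $F(\tilde\alpha)\in A^+\otimes Z$ and it is a cocycle. *)

theory Defs
  imports Complex_Main
begin

definition pm :: "int \<Rightarrow> rat" where
  "pm k = (if even k then 1 else -1)"

definition graded_vs :: "(rat \<Rightarrow> 'v::ab_group_add \<Rightarrow> 'v) \<Rightarrow> ('i \<Rightarrow> 'v set) \<Rightarrow> bool" where
  "graded_vs s G \<longleftrightarrow> vector_space s \<and> (\<forall>i. module.subspace s (G i)) \<and>
     (\<forall>x. \<exists>!f. finite {i. f i \<noteq> 0} \<and> (\<forall>i. f i \<in> G i) \<and> x = (\<Sum>i\<in>{i. f i \<noteq> 0}. f i))"

definition cdga :: "(rat \<Rightarrow> 'a::ring \<Rightarrow> 'a) \<Rightarrow> (nat \<Rightarrow> 'a set) \<Rightarrow> ('a \<Rightarrow> 'a) \<Rightarrow> bool" where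
  "cdga sA Ad dA \<longleftrightarrow> graded_vs sA Ad \<and>
     (\<forall>c x y. sA c (x * y) = sA c x * y \<and> sA c (x * y) = x * sA c y) \<and>
     (\<forall>i j x y. x \<in> Ad i \<longrightarrow> y \<in> Ad j \<longrightarrow>
        x * y \<in> Ad (i + j) \<and> x * y = sA (pm (int i * int j)) (y * x)) \<and>
     Vector_Spaces.linear sA sA dA \<and>
     (\<forall>i x. x \<in> Ad i \<longrightarrow> dA x \<in> Ad (Suc i)) \<and>
     (\<forall>x. dA (dA x) = 0) \<and>
     (\<forall>i x y. x \<in> Ad i \<longrightarrow> dA (x * y) = dA x * y + sA (pm (int i)) (x * dA y))"

definition bilinear_map :: "(rat \<Rightarrow> 'u::ab_group_add \<Rightarrow> 'u) \<Rightarrow> (rat \<Rightarrow> 'v::ab_group_add \<Rightarrow> 'v)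
    \<Rightarrow> (rat \<Rightarrow> 'w::ab_group_add \<Rightarrow> 'w) \<Rightarrow> ('u \<Rightarrow> 'v \<Rightarrow> 'w) \<Rightarrow> bool" where
  "bilinear_map s1 s2 s3 b \<longleftrightarrow>
     (\<forall>y. Vector_Spaces.linear s1 s3 (\<lambda>x. b x y)) \<and> (\<forall>x. Vector_Spaces.linear s2 s3 (b x))"

definition dgla :: "(rat \<Rightarrow> 'l::ab_group_add \<Rightarrow> 'l) \<Rightarrow> (int \<Rightarrow> 'l set)
    \<Rightarrow> ('l \<Rightarrow> 'l \<Rightarrow> 'l) \<Rightarrow> ('l \<Rightarrow> 'l) \<Rightarrow> bool" where
  "dgla s Ld br d \<longleftrightarrow> graded_vs s Ld \<and> bilinear_map s s s br \<and>
     (\<forall>i j x y. x \<in> Ld i \<longrightarrow> y \<in> Ld j \<longrightarrow>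
        br x y \<in> Ld (i + j) \<and> br x y = - s (pm (i * j)) (br y x)) \<and>
     (\<forall>i j k x y z. x \<in> Ld i \<longrightarrow> y \<in> Ld j \<longrightarrow> z \<in> Ld k \<longrightarrow>
        s (pm (i * k)) (br x (br y z)) + s (pm (j * i)) (br y (br z x))
          + s (pm (k * j)) (br z (br x y)) = 0) \<and>
     Vector_Spaces.linear s s d \<and>
     (\<forall>i x. x \<in> Ld i \<longrightarrow> d x \<in> Ld (i + 1)) \<and>
     (\<forall>x. d (d x) = 0) \<and>
     (\<forall>i x y. x \<in> Ld i \<longrightarrow> d (br x y) = br (d x) y + s (pm i) (br x (d y)))"

fun lcs :: "(rat \<Rightarrow> 'l::ab_group_add \<Rightarrow> 'l) \<Rightarrow> ('l \<Rightarrow> 'l \<Rightarrow> 'l) \<Rightarrow> nat \<Rightarrow> 'l set" where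
  "lcs s br 0 = UNIV"
| "lcs s br (Suc n) = module.span s {br x y | x y. y \<in> lcs s br n}"

definition nilpotent_la :: "(rat \<Rightarrow> 'l::ab_group_add \<Rightarrow> 'l) \<Rightarrow> ('l \<Rightarrow> 'l \<Rightarrow> 'l) \<Rightarrow> bool" where
  "nilpotent_la s br \<longleftrightarrow> (\<exists>n. lcs s br n = {0})"

definition nonpos_graded :: "(int \<Rightarrow> 'l::zero set) \<Rightarrow> bool" where
  "nonpos_graded Ld \<longleftrightarrow> (\<forall>j>0. Ld j = {0})"

definition dgla_hom :: "(rat \<Rightarrow> 'l::ab_group_add \<Rightarrow> 'l) \<Rightarrow> (int \<Rightarrow> 'l set) \<Rightarrow> ('l \<Rightarrow> 'l \<Rightarrow> 'l) \<Rightarrow> ('l \<Rightarrow> 'l)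
    \<Rightarrow> (rat \<Rightarrow> 'm::ab_group_add \<Rightarrow> 'm) \<Rightarrow> (int \<Rightarrow> 'm set) \<Rightarrow> ('m \<Rightarrow> 'm \<Rightarrow> 'm) \<Rightarrow> ('m \<Rightarrow> 'm)
    \<Rightarrow> ('l \<Rightarrow> 'm) \<Rightarrow> bool" where
  "dgla_hom s1 G1 br1 d1 s2 G2 br2 d2 f \<longleftrightarrow> Vector_Spaces.linear s1 s2 f \<and>
     (\<forall>j x. x \<in> G1 j \<longrightarrow> f x \<in> G2 j) \<and>
     (\<forall>x y. f (br1 x y) = br2 (f x) (f y)) \<and> (\<forall>x. f (d1 x) = d2 (f x))"

text \<open>Central extension 0 \<rightarrow> Z \<rightarrow> Lt \<rightarrow> L \<rightarrow> 0 with Z = ker pi, of nilpotent DGLAs in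
  nonpositive degrees, Z \<subseteq> ker dT, Im dT \<inter> Z = 0, and the isomorphism Z \<cong> Q[q]
  given by a nonzero generator e of Z of degree q \<le> 0 (Z = Q e).\<close>

definition mc_product_data ::
  "(rat \<Rightarrow> 'l::ab_group_add \<Rightarrow> 'l) \<Rightarrow> (int \<Rightarrow> 'l set) \<Rightarrow> ('l \<Rightarrow> 'l \<Rightarrow> 'l) \<Rightarrow> ('l \<Rightarrow> 'l)
   \<Rightarrow> (rat \<Rightarrow> 'm::ab_group_add \<Rightarrow> 'm) \<Rightarrow> (int \<Rightarrow> 'm set) \<Rightarrow> ('m \<Rightarrow> 'm \<Rightarrow> 'm) \<Rightarrow> ('m \<Rightarrow> 'm)
   \<Rightarrow> ('l \<Rightarrow> 'm) \<Rightarrow> int \<Rightarrow> 'l \<Rightarrow> bool" where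
  "mc_product_data sT GT brT dT sL GL brL dL \<pi> q e \<longleftrightarrow>
     dgla sT GT brT dT \<and> dgla sL GL brL dL \<and>
     nilpotent_la sT brT \<and> nilpotent_la sL brL \<and>
     nonpos_graded GT \<and> nonpos_graded GL \<and>
     dgla_hom sT GT brT dT sL GL brL dL \<pi> \<and> surj \<pi> \<and>
     (\<forall>x z. \<pi> z = 0 \<longrightarrow> brT x z = 0) \<and>
     (\<forall>z. \<pi> z = 0 \<longrightarrow> dT z = 0) \<and>
     (\<forall>x. \<pi> (dT x) = 0 \<longrightarrow> dT x = 0) \<and>
     q \<le> 0 \<and> e \<in> GT q \<and> e \<noteq> 0 \<and> {z. \<pi> z = 0} = range (\<lambda>c. sT c e)"

text \<open>An element of A \<otimes> L is represented by a finite formal sum of pure tensors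
  a \<otimes> w of homogeneous elements, each entry recording the degrees: ((i,a),(j,w))
  with a \<in> A^i, w \<in> L^j, total degree i + j.  Two formal sums represent the same
  element of A \<otimes> L (over the field Q) iff every Q-bilinear form A \<times> L \<rightarrow> Q takes the
  same value on them (the linear dual of A \<otimes> L is the space of bilinear forms and
  separates points).\<close>

type_synonym ('a, 'l) ftens = "((nat \<times> 'a) \<times> (int \<times> 'l)) list"

definition wf_tens :: "(nat \<Rightarrow> 'a set) \<Rightarrow> (int \<Rightarrow> 'l set) \<Rightarrow> ('a, 'l) ftens \<Rightarrow> bool" where
  "wf_tens Ad Ld x \<longleftrightarrow> (\<forall>((i, a), (j, w)) \<in> set x. a \<in> Ad i \<and> w \<in> Ld j)"

definition tens_eval :: "('a \<Rightarrow> 'l \<Rightarrow> rat) \<Rightarrow> ('a, 'l) ftens \<Rightarrow> rat" where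
  "tens_eval \<beta> x = (\<Sum>((i, a), (j, w)) \<leftarrow> x. \<beta> a w)"

definition teq :: "(rat \<Rightarrow> 'a::ab_group_add \<Rightarrow> 'a) \<Rightarrow> (rat \<Rightarrow> 'l::ab_group_add \<Rightarrow> 'l)
    \<Rightarrow> ('a, 'l) ftens \<Rightarrow> ('a, 'l) ftens \<Rightarrow> bool" where
  "teq sA sL x y \<longleftrightarrow> (\<forall>\<beta>. bilinear_map sA sL (*) \<beta> \<longrightarrow> tens_eval \<beta> x = tens_eval \<beta> y)"

definition tdiff :: "(rat \<Rightarrow> 'a \<Rightarrow> 'a) \<Rightarrow> ('a \<Rightarrow> 'a) \<Rightarrow> ('l \<Rightarrow> 'l) \<Rightarrow> ('a, 'l) ftens \<Rightarrow> ('a, 'l) ftens" where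
  "tdiff sA dA dL x = concat (map (\<lambda>((i, a), (j, w)).
      [((Suc i, dA a), (j, w)), ((i, sA (pm (int i)) a), (j + 1, dL w))]) x)"

definition tbr :: "(rat \<Rightarrow> 'a::times \<Rightarrow> 'a) \<Rightarrow> ('l \<Rightarrow> 'l \<Rightarrow> 'l)
    \<Rightarrow> ('a, 'l) ftens \<Rightarrow> ('a, 'l) ftens \<Rightarrow> ('a, 'l) ftens" where
  "tbr sA br x y = concat (map (\<lambda>((i1, a1), (j1, w1)). map (\<lambda>((i2, a2), (j2, w2)).
      ((i1 + i2, sA (pm (j1 * int i2)) (a1 * a2)), (j1 + j2, br w1 w2))) y) x)"

definition MC_F :: "(rat \<Rightarrow> 'a::times \<Rightarrow> 'a) \<Rightarrow> ('a \<Rightarrow> 'a) \<Rightarrow> ('l \<Rightarrow> 'l \<Rightarrow> 'l) \<Rightarrow> ('l \<Rightarrow> 'l)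
    \<Rightarrow> ('a, 'l) ftens \<Rightarrow> ('a, 'l) ftens" where
  "MC_F sA dA br dL x = tdiff sA dA dL x @
      map (\<lambda>((i, a), jw). ((i, sA (1/2) a), jw)) (tbr sA br x x)"

definition tdeg_one :: "('a, 'l) ftens \<Rightarrow> bool" where
  "tdeg_one x \<longleftrightarrow> (\<forall>((i, a), (j, w)) \<in> set x. int i + j = 1)"

definition in_Aplus :: "('a, 'l) ftens \<Rightarrow> bool" where
  "in_Aplus x \<longleftrightarrow> (\<forall>((i, a), jw) \<in> set x. i > 0)"

definition tmap :: "('l \<Rightarrow> 'm) \<Rightarrow> ('a, 'l) ftens \<Rightarrow> ('a, 'm) ftens" where
  "tmap f x = map (\<lambda>(ia, (j, w)). (ia, (j, f w))) x"

text \<open>Elements of A^+ \<otimes> Z (entries with Lt-component in Z = ker pi), and the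
  identification A \<otimes> Z \<cong> A (shift by q) induced by Z \<cong> Q[q], c e \<mapsto> c.\<close>

definition in_AplusZ :: "(nat \<Rightarrow> 'a set) \<Rightarrow> (int \<Rightarrow> 'l set) \<Rightarrow> ('l \<Rightarrow> 'm::zero) \<Rightarrow> ('a, 'l) ftens \<Rightarrow> bool" where
  "in_AplusZ Ad Ld \<pi> x \<longleftrightarrow> wf_tens Ad Ld x \<and> in_Aplus x \<and> (\<forall>(ia, (j, w)) \<in> set x. \<pi> w = 0)"

definition zcoef :: "(rat \<Rightarrow> 'l \<Rightarrow> 'l) \<Rightarrow> 'l \<Rightarrow> 'l \<Rightarrow> rat" where
  "zcoef s e z = (THE c. z = s c e)"

definition phiZ :: "(rat \<Rightarrow> 'a::ab_group_add \<Rightarrow> 'a) \<Rightarrow> (rat \<Rightarrow> 'l \<Rightarrow> 'l) \<Rightarrow> 'l \<Rightarrow> ('a, 'l) ftens \<Rightarrow> 'a" where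
  "phiZ sA sL e x = (\<Sum>((i, a), (j, z)) \<leftarrow> x. sA (zcoef sL e z) a)"

end

theory Submission
  imports Defs
begin

text \<open>Over \<open>\<rat>\<close>, formal tensors are compared through bilinear forms, so identities in
  \<open>A \<otimes> L\<close> are proved by evaluating both sides against an arbitrary form.  Differential and bracket of
  \<open>A \<otimes> L\<close> respect this equality, and for a degree-one \<open>x\<close> the Bianchi identity
  \<open>d F(x) = [F(x), x]\<close> holds.  A lift \<open>\<alpha>t\<close> of an MC element has \<open>F(\<alpha>t)\<close> killed by \<open>\<pi>\<close>,
  i.e. \<open>F(\<alpha>t) \<in> A\<^sup>+ \<otimes> Z\<close>; since \<open>Z\<close> is central and closed, Bianchi gives
  \<open>d F(\<alpha>t) = [F(\<alpha>t), \<alpha>t] = 0\<close>.  Two lifts differ by some \<open>\<delta> \<in> A\<^sup>+ \<otimes> Z\<close>, and centrality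
  reduces \<open>F(\<alpha>t\<^sub>1 + \<delta>)\<close> to \<open>F(\<alpha>t\<^sub>1) + d \<delta>\<close>.  Finally the coefficient map
  \<open>A \<otimes> Z \<cong> A\<close>, obtained from a functional \<open>\<zeta>\<close> with \<open>\<zeta> e = 1\<close> vanishing off degree \<open>q\<close>,
  commutes with \<open>d\<close> and turns these statements into statements about \<open>A\<close>.\<close>

lemma sum_list_map_cong:
  "(\<And>x. x \<in> set xs \<Longrightarrow> f x = g x) \<Longrightarrow> sum_list (map f xs) = sum_list (map g xs)"
  by (metis map_cong)

lemma sum_list_map_zero:
  "(\<And>x. x \<in> set xs \<Longrightarrow> f x = 0) \<Longrightarrow> sum_list (map f xs) = (0::'c::comm_monoid_add)"
  by (induct xs) auto

lemma sum_list_swap: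
  "(\<Sum>a\<leftarrow>xs. \<Sum>b\<leftarrow>ys. f a b) = (\<Sum>b\<leftarrow>ys. \<Sum>a\<leftarrow>xs. (f a b :: 'c::comm_monoid_add))"
  by (induct xs) (auto simp: sum_list_addf)

lemma sum_list_map_concat: "sum_list (map f (concat xs)) = (\<Sum>l\<leftarrow>xs. sum_list (map f l))"
  by (induct xs) auto

lemma sum_list_negf: "(\<Sum>x\<leftarrow>xs. - f x) = - (\<Sum>x\<leftarrow>xs. f x :: 'c::ab_group_add)"
  by (induct xs) auto

lemma pm_add: "pm (a + b) = pm a * pm b"
  by (auto simp: pm_def)

lemma pm_Suc: "pm (int (Suc i)) = - pm (int i)"
  by (auto simp: pm_def)

lemma pm_1: "pm 1 = -1"
  by (simp add: pm_def)

lemma pm_mult: "pm (a * b) = (if even a \<or> even b then 1 else -1)"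
  by (auto simp: pm_def)

lemma vector_space_rat_mult: "vector_space ((*) :: rat \<Rightarrow> rat \<Rightarrow> rat)"
  by unfold_locales (auto simp: algebra_simps)

lemma linear_simps:
  assumes "Vector_Spaces.linear s1 s2 f"
  shows "f (x + y) = f x + f y" "f (s1 c x) = s2 c (f x)" "f 0 = 0" "f (- x) = - f x"
    "f (x - y) = f x - f y"
  using module_hom.add[OF assms[folded module_hom_iff_linear]]
    module_hom.scale[OF assms[folded module_hom_iff_linear]]
    module_hom.zero[OF assms[folded module_hom_iff_linear]]
    module_hom.neg[OF assms[folded module_hom_iff_linear]]
    module_hom.diff[OF assms[folded module_hom_iff_linear]] by auto

lemma linearI_vector_space:
  assumes "vector_space s1" "vector_space s2" "\<And>x y. f (x + y) = f x + f y"
    "\<And>c x. f (s1 c x) = s2 c (f x)"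
  shows "Vector_Spaces.linear s1 s2 f"
  using assms by (auto simp: Vector_Spaces.linear_iff)

lemma linear_sum_list:
  "Vector_Spaces.linear s1 s2 g \<Longrightarrow> g (sum_list (map f x)) = sum_list (map (\<lambda>t. g (f t)) x)"
  by (induct x) (auto simp: linear_simps)

lemma linear_functional_exists:
  assumes "vector_space s" "x \<noteq> 0"
  shows "\<exists>g. Vector_Spaces.linear s ((*) :: rat \<Rightarrow> rat \<Rightarrow> rat) g \<and> g x = 1"
proof -
  have "\<not> module.dependent s {x}"
    using vector_space.dependent_single[OF assms(1)] assms(2) by simp
  from vector_space_pair.linear_independent_extend[OF _ this, of "(*)" "\<lambda>_. 1"]
  show ?thesis
    using assms(1) vector_space_rat_mult by (auto simp: vector_space_pair_def)
qed

lemma linear_functionals_separate: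
  assumes "vector_space s"
    and "\<And>f. Vector_Spaces.linear s ((*) :: rat \<Rightarrow> rat \<Rightarrow> rat) f \<Longrightarrow> f x = f y"
  shows "x = y"
proof (rule ccontr)
  assume "x \<noteq> y"
  then obtain g where g: "Vector_Spaces.linear s (*) g" "g (x - y) = 1"
    using linear_functional_exists[OF assms(1)] by (metis eq_iff_diff_eq_0)
  then show False using assms(2)[OF g(1)] linear_simps[OF g(1)] by simp
qed

definition graded_decomposition :: "('i \<Rightarrow> 'v::ab_group_add set) \<Rightarrow> 'v \<Rightarrow> ('i \<Rightarrow> 'v) \<Rightarrow> bool" where
  "graded_decomposition G x f \<longleftrightarrow>
     finite {i. f i \<noteq> 0} \<and> (\<forall>i. f i \<in> G i) \<and> x = (\<Sum>i\<in>{i. f i \<noteq> 0}. f i)"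

definition component :: "('i \<Rightarrow> 'v::ab_group_add set) \<Rightarrow> 'v \<Rightarrow> 'i \<Rightarrow> 'v" where
  "component G x = (THE f. graded_decomposition G x f)"

definition graded_rescale ::
    "(rat \<Rightarrow> 'v::ab_group_add \<Rightarrow> 'v) \<Rightarrow> ('i \<Rightarrow> 'v set) \<Rightarrow> ('i \<Rightarrow> rat) \<Rightarrow> 'v \<Rightarrow> 'v" where
  "graded_rescale s G sg x = (\<Sum>i\<in>{i. component G x i \<noteq> 0}. s (sg i) (component G x i))"

lemma sum_support_superset:
  assumes "finite S" "{i. f i \<noteq> 0} \<subseteq> S" "\<And>i. h i 0 = 0"
  shows "(\<Sum>i\<in>{i. f i \<noteq> 0}. h i (f i)) = (\<Sum>i\<in>S. h i (f i))"
  by (rule sum.mono_neutral_left) (use assms in auto)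

context
  fixes s :: "rat \<Rightarrow> 'v::ab_group_add \<Rightarrow> 'v" and G :: "'i \<Rightarrow> 'v set"
  assumes graded: "graded_vs s G"
begin

lemma graded_vector_space: "vector_space s"
  using graded by (simp add: graded_vs_def)

lemma graded_module: "module s"
  using graded_vector_space by (simp add: module_iff_vector_space)

lemma graded_subspace: "module.subspace s (G i)"
  using graded by (simp add: graded_vs_def)

lemma graded_zero: "0 \<in> G i"
  using module.subspace_0[OF graded_module graded_subspace] .

lemma graded_add: "x \<in> G i \<Longrightarrow> y \<in> G i \<Longrightarrow> x + y \<in> G i"
  using module.subspace_add[OF graded_module graded_subspace] .

lemma graded_scale: "x \<in> G i \<Longrightarrow> s c x \<in> G i"
  using module.subspace_scale[OF graded_module graded_subspace] .

lemma graded_neg: "x \<in> G i \<Longrightarrow> - x \<in> G i"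
  using module.subspace_neg[OF graded_module graded_subspace] .

lemma graded_sum_list: "(\<And>t. t \<in> set x \<Longrightarrow> f t \<in> G i) \<Longrightarrow> sum_list (map f x) \<in> G i"
  by (induct x) (auto intro: graded_add graded_zero)

lemma scale_simps:
  "s c (x + y) = s c x + s c y" "s (a + b) x = s a x + s b x" "s a (s b x) = s (a * b) x"
  "s 1 x = x" "s 0 x = 0" "s c 0 = 0" "s c (- x) = - s c x" "s (- a) x = - s a x"
  "s c (x - y) = s c x - s c y"
  using graded_vector_space graded_module
  by (auto simp: vector_space.vector_space_assms module.scale_zero_left
      module.scale_zero_right module.scale_minus_right module.scale_minus_left
      module.scale_right_diff_distrib)

lemma scale_minus_one: "s (-1) x = - x"
  by (metis scale_simps(4,8))

lemma component_ex1: "\<exists>!f. graded_decomposition G x f"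
  using graded unfolding graded_vs_def graded_decomposition_def by blast

lemma component_decomposition: "graded_decomposition G x (component G x)"
  unfolding component_def using theI'[OF component_ex1] .

lemma component_unique: "graded_decomposition G x f \<Longrightarrow> component G x = f"
  using component_ex1 component_decomposition by blast

lemma component_homogeneous:
  assumes "x \<in> G i"
  shows "component G x = (\<lambda>k. if k = i then x else 0)"
proof (rule component_unique)
  have "{k. (if k = i then x else 0) \<noteq> 0} = (if x = 0 then {} else {i})" by auto
  then show "graded_decomposition G x (\<lambda>k. if k = i then x else 0)"
    unfolding graded_decomposition_def using assms graded_zero by auto
qed

lemma graded_rescale_homogeneous: "x \<in> G i \<Longrightarrow> graded_rescale s G sg x = s (sg i) x"
  unfolding graded_rescale_def by (cases "x = 0") (auto simp: component_homogeneous scale_simps)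

lemma graded_rescale_eq_sum:
  assumes "finite S" "{i. component G x i \<noteq> 0} \<subseteq> S"
  shows "graded_rescale s G sg x = (\<Sum>i\<in>S. s (sg i) (component G x i))"
  unfolding graded_rescale_def by (rule sum_support_superset[OF assms]) (simp add: scale_simps)

lemma component_add: "component G (x + y) = (\<lambda>i. component G x i + component G y i)"
proof (rule component_unique)
  let ?f = "component G x" and ?g = "component G y"
  let ?S = "{i. ?f i \<noteq> 0} \<union> {i. ?g i \<noteq> 0}"
  have fx: "finite {i. ?f i \<noteq> 0}" "\<forall>i. ?f i \<in> G i" "x = (\<Sum>i\<in>{i. ?f i \<noteq> 0}. ?f i)"
    using component_decomposition[of x] unfolding graded_decomposition_def by auto
  have fy: "finite {i. ?g i \<noteq> 0}" "\<forall>i. ?g i \<in> G i" "y = (\<Sum>i\<in>{i. ?g i \<noteq> 0}. ?g i)"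
    using component_decomposition[of y] unfolding graded_decomposition_def by auto
  have fS: "finite ?S" using fx fy by auto
  have sub: "{i. ?f i + ?g i \<noteq> 0} \<subseteq> ?S" by auto
  have "x = (\<Sum>i\<in>?S. ?f i)" using fx(3) sum_support_superset[OF fS, of ?f "\<lambda>i v. v"] by auto
  moreover have "y = (\<Sum>i\<in>?S. ?g i)" using fy(3) sum_support_superset[OF fS, of ?g "\<lambda>i v. v"] by auto
  moreover have "(\<Sum>i\<in>{i. ?f i + ?g i \<noteq> 0}. ?f i + ?g i) = (\<Sum>i\<in>?S. ?f i + ?g i)"
    using sum_support_superset[OF fS sub, of "\<lambda>i v. v"] by auto
  ultimately show "graded_decomposition G (x + y) (\<lambda>i. ?f i + ?g i)"
    unfolding graded_decomposition_def using fS sub finite_subset fx(2) fy(2) graded_add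
    by (auto simp: sum.distrib)
qed

lemma component_scale: "component G (s c x) = (\<lambda>i. s c (component G x i))"
proof (rule component_unique)
  let ?f = "component G x"
  have fx: "finite {i. ?f i \<noteq> 0}" "\<forall>i. ?f i \<in> G i" "x = (\<Sum>i\<in>{i. ?f i \<noteq> 0}. ?f i)"
    using component_decomposition[of x] unfolding graded_decomposition_def by auto
  have sub: "{i. s c (?f i) \<noteq> 0} \<subseteq> {i. ?f i \<noteq> 0}" using scale_simps by auto
  have "(\<Sum>i\<in>{i. s c (?f i) \<noteq> 0}. s c (?f i)) = (\<Sum>i\<in>{i. ?f i \<noteq> 0}. s c (?f i))"
    using sum_support_superset[OF fx(1) sub, of "\<lambda>i v. v"] by auto
  also have "\<dots> = s c x"
    using fx(3) module.scale_sum_right[OF graded_module] by metis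
  finally show "graded_decomposition G (s c x) (\<lambda>i. s c (?f i))"
    unfolding graded_decomposition_def using fx(1) sub finite_subset fx(2) graded_scale by auto
qed

lemma graded_rescale_linear: "Vector_Spaces.linear s s (graded_rescale s G sg)"
proof (rule linearI_vector_space[OF graded_vector_space graded_vector_space])
  fix x y
  let ?S = "{i. component G x i \<noteq> 0} \<union> {i. component G y i \<noteq> 0}"
  have fS: "finite ?S"
    using component_decomposition[of x] component_decomposition[of y]
    unfolding graded_decomposition_def by auto
  have sub: "{i. component G (x + y) i \<noteq> 0} \<subseteq> ?S" by (auto simp: component_add)
  show "graded_rescale s G sg (x + y) = graded_rescale s G sg x + graded_rescale s G sg y"
    using graded_rescale_eq_sum[OF fS sub, of sg] graded_rescale_eq_sum[OF fS, of x sg]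
      graded_rescale_eq_sum[OF fS, of y sg]
    by (auto simp: component_add scale_simps sum.distrib)
next
  fix c x
  let ?S = "{i. component G x i \<noteq> 0}"
  have fS: "finite ?S" using component_decomposition[of x] unfolding graded_decomposition_def by auto
  have sub: "{i. component G (s c x) i \<noteq> 0} \<subseteq> ?S" by (auto simp: component_scale scale_simps)
  show "graded_rescale s G sg (s c x) = s c (graded_rescale s G sg x)"
    using graded_rescale_eq_sum[OF fS sub, of sg] graded_rescale_eq_sum[OF fS _, of x sg]
    by (auto simp: component_scale scale_simps mult.commute module.scale_sum_right[OF graded_module])
qed

end

type_synonym ('a, 'l) tentry = "(nat \<times> 'a) \<times> (int \<times> 'l)"

definition entry_eval :: "('a \<Rightarrow> 'l \<Rightarrow> rat) \<Rightarrow> ('a, 'l) tentry \<Rightarrow> rat" where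
  "entry_eval \<beta> t = (case t of ((i, a), (j, w)) \<Rightarrow> \<beta> a w)"

lemma entry_eval_simp [simp]: "entry_eval \<beta> ((i, a), (j, w)) = \<beta> a w"
  by (simp add: entry_eval_def)

lemma tens_eval_eq_sum_list: "tens_eval \<beta> x = sum_list (map (entry_eval \<beta>) x)"
  unfolding tens_eval_def entry_eval_def
  by (rule arg_cong[where f=sum_list], rule map_cong) (auto split: prod.splits)

lemma tens_eval_Nil [simp]: "tens_eval \<beta> [] = 0"
  by (simp add: tens_eval_eq_sum_list)

lemma tens_eval_append [simp]: "tens_eval \<beta> (x @ y) = tens_eval \<beta> x + tens_eval \<beta> y"
  by (simp add: tens_eval_eq_sum_list)

lemma tens_eval_Cons: "tens_eval \<beta> (t # y) = entry_eval \<beta> t + tens_eval \<beta> y"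
  by (simp add: tens_eval_eq_sum_list)

lemma tens_eval_concat: "tens_eval \<beta> (concat xs) = sum_list (map (tens_eval \<beta>) xs)"
  by (induct xs) auto

lemma teq_sym: "teq s1 s2 x y \<Longrightarrow> teq s1 s2 y x"
  by (simp add: teq_def)

definition entry_br :: "(rat \<Rightarrow> 'a::times \<Rightarrow> 'a) \<Rightarrow> ('l \<Rightarrow> 'l \<Rightarrow> 'l)
    \<Rightarrow> ('a, 'l) tentry \<Rightarrow> ('a, 'l) tentry \<Rightarrow> ('a, 'l) tentry" where
  "entry_br sA br t1 t2 = (case t1 of ((i1, a1), (j1, w1)) \<Rightarrow> case t2 of ((i2, a2), (j2, w2)) \<Rightarrow>
     ((i1 + i2, sA (pm (j1 * int i2)) (a1 * a2)), (j1 + j2, br w1 w2)))"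

lemma entry_br_simp [simp]: "entry_br sA br ((i1, a1), (j1, w1)) ((i2, a2), (j2, w2)) =
     ((i1 + i2, sA (pm (j1 * int i2)) (a1 * a2)), (j1 + j2, br w1 w2))"
  by (simp add: entry_br_def)

lemma tbr_eq_concat: "tbr sA br x y = concat (map (\<lambda>t1. map (entry_br sA br t1) y) x)"
  unfolding tbr_def entry_br_def
  by (intro arg_cong[where f=concat] map_cong refl) (auto split: prod.splits)

definition entry_dA :: "('a \<Rightarrow> 'a) \<Rightarrow> ('a, 'l) tentry \<Rightarrow> ('a, 'l) tentry" where
  "entry_dA dA t = (case t of ((i, a), (j, w)) \<Rightarrow> ((Suc i, dA a), (j, w)))"

definition entry_dL :: "(rat \<Rightarrow> 'a \<Rightarrow> 'a) \<Rightarrow> ('l \<Rightarrow> 'l) \<Rightarrow> ('a, 'l) tentry \<Rightarrow> ('a, 'l) tentry" where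
  "entry_dL sA dL t = (case t of ((i, a), (j, w)) \<Rightarrow> ((i, sA (pm (int i)) a), (j + 1, dL w)))"

lemma entry_d_simps [simp]:
  "entry_dA dA ((i, a), (j, w)) = ((Suc i, dA a), (j, w))"
  "entry_dL sA dL ((i, a), (j, w)) = ((i, sA (pm (int i)) a), (j + 1, dL w))"
  by (simp_all add: entry_dA_def entry_dL_def)

lemma tdiff_eq_concat: "tdiff sA dA dL x = concat (map (\<lambda>t. [entry_dA dA t, entry_dL sA dL t]) x)"
  unfolding tdiff_def entry_dA_def entry_dL_def
  by (intro arg_cong[where f=concat] map_cong refl) (auto split: prod.splits)

lemma tdiff_append: "tdiff sA dA dL (x @ y) = tdiff sA dA dL x @ tdiff sA dA dL y"
  by (simp add: tdiff_def)

lemma tbr_append: "tbr sA br (x @ y) z = tbr sA br x z @ tbr sA br y z"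
  by (simp add: tbr_def)

lemma tens_eval_tbr:
  "tens_eval \<beta> (tbr sA br x y) = (\<Sum>t1\<leftarrow>x. \<Sum>t2\<leftarrow>y. entry_eval \<beta> (entry_br sA br t1 t2))"
  unfolding tbr_eq_concat tens_eval_concat by (simp add: tens_eval_eq_sum_list o_def)

lemma tens_eval_tbr_append_right:
  "tens_eval \<beta> (tbr sA br x (y @ z)) = tens_eval \<beta> (tbr sA br x y) + tens_eval \<beta> (tbr sA br x z)"
  unfolding tens_eval_tbr by (simp add: sum_list_addf)

lemma tens_eval_tdiff: "tens_eval \<beta> (tdiff sA dA dL x) =
    (\<Sum>t\<leftarrow>x. entry_eval \<beta> (entry_dA dA t) + entry_eval \<beta> (entry_dL sA dL t))"
  unfolding tdiff_eq_concat tens_eval_concat by (simp add: tens_eval_eq_sum_list o_def)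

definition entry_half :: "(rat \<Rightarrow> 'a \<Rightarrow> 'a) \<Rightarrow> ('a, 'l) tentry \<Rightarrow> ('a, 'l) tentry" where
  "entry_half sA t = (case t of ((i, a), jw) \<Rightarrow> ((i, sA (1/2) a), jw))"

lemma MC_F_eq: "MC_F sA dA br dL x = tdiff sA dA dL x @ map (entry_half sA) (tbr sA br x x)"
  unfolding MC_F_def entry_half_def
  by (intro arg_cong2[where f="(@)"] map_cong refl) (auto split: prod.splits)

lemma in_Aplus_MC_F: "in_Aplus x \<Longrightarrow> in_Aplus (MC_F sA dA br dL x)"
  unfolding in_Aplus_def MC_F_eq tdiff_eq_concat tbr_eq_concat entry_half_def
  by (fastforce split: prod.splits)

definition tdeg :: "int \<Rightarrow> ('a, 'l) ftens \<Rightarrow> bool" where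
  "tdeg k x \<longleftrightarrow> (\<forall>((i, a), (j, w)) \<in> set x. int i + j = k)"

lemma tdeg_one_eq: "tdeg_one x = tdeg 1 x"
  by (simp add: tdeg_one_def tdeg_def)

lemma tdegD: "tdeg k x \<Longrightarrow> ((i, a), (j, w)) \<in> set x \<Longrightarrow> int i + j = k"
  unfolding tdeg_def by fastforce

lemma tdeg_append [simp]: "tdeg k (x @ y) \<longleftrightarrow> tdeg k x \<and> tdeg k y"
  unfolding tdeg_def by (simp add: ball_Un)

lemma wf_tensD: "wf_tens Ad G x \<Longrightarrow> ((i, a), (j, w)) \<in> set x \<Longrightarrow> a \<in> Ad i \<and> w \<in> G j"
  unfolding wf_tens_def by fastforce

lemma wf_tens_append [simp]: "wf_tens Ad G (x @ y) \<longleftrightarrow> wf_tens Ad G x \<and> wf_tens Ad G y"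
  unfolding wf_tens_def by (simp add: ball_Un)

lemma wf_tens_tdeg_entryD: "wf_tens Ad G x \<Longrightarrow> tdeg k x \<Longrightarrow> t \<in> set x \<Longrightarrow>
   \<exists>i a j w. t = ((i, a), (j, w)) \<and> a \<in> Ad i \<and> w \<in> G j \<and> int i + j = k"
  by (metis prod.collapse tdegD wf_tensD)

definition entry_map :: "('l \<Rightarrow> 'm) \<Rightarrow> ('a, 'l) tentry \<Rightarrow> ('a, 'm) tentry" where
  "entry_map f t = (case t of ((i, a), (j, w)) \<Rightarrow> ((i, a), (j, f w)))"

lemma entry_map_simp [simp]: "entry_map f ((i, a), (j, w)) = ((i, a), (j, f w))"
  by (simp add: entry_map_def)

lemma tmap_eq_map: "tmap f x = map (entry_map f) x"
  unfolding tmap_def entry_map_def by (rule map_cong) (auto split: prod.splits)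

lemma tmap_append: "tmap f (x @ y) = tmap f x @ tmap f y"
  by (simp add: tmap_def)

lemma tens_eval_tmap: "tens_eval \<beta> (tmap f x) = tens_eval (\<lambda>a w. \<beta> a (f w)) x"
  unfolding tmap_eq_map tens_eval_eq_sum_list map_map
  by (rule sum_list_map_cong) (auto split: prod.splits)

lemma wf_tens_tmap:
  assumes "\<And>j x. x \<in> G j \<Longrightarrow> f x \<in> G' j" "wf_tens Ad G x"
  shows "wf_tens Ad G' (tmap f x)"
  using assms unfolding wf_tens_def tmap_eq_map by (auto split: prod.splits)

lemma tmap_MC_F:
  assumes "\<And>w. f (dT w) = dL (f w)" "\<And>w v. f (brT w v) = brL (f w) (f v)"
  shows "tmap f (MC_F sA dA brT dT x) = MC_F sA dA brL dL (tmap f x)"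
proof -
  have "entry_map f (entry_dA dA t) = entry_dA dA (entry_map f t)"
    and "entry_map f (entry_dL sA dT t) = entry_dL sA dL (entry_map f t)"
    and "entry_map f (entry_half sA t) = entry_half sA (entry_map f t)" for t
    by (cases t; auto simp: assms entry_half_def)+
  moreover have "entry_map f (entry_br sA brT t1 t2) = entry_br sA brL (entry_map f t1) (entry_map f t2)"
    for t1 t2 by (cases t1, cases t2) (auto simp: assms)
  ultimately show ?thesis
    unfolding tmap_eq_map MC_F_eq tdiff_eq_concat tbr_eq_concat by (simp add: map_concat o_def)
qed

definition tneg :: "('a::uminus, 'l) ftens \<Rightarrow> ('a, 'l) ftens" where
  "tneg x = map (\<lambda>((i, a), jw). ((i, - a), jw)) x"

lemma tmap_tneg: "tmap f (tneg x) = tneg (tmap f x)"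
  unfolding tmap_eq_map tneg_def by (auto split: prod.splits)

lemma tdeg_tneg: "tdeg k x \<Longrightarrow> tdeg k (tneg x)"
  unfolding tdeg_def tneg_def by (auto split: prod.splits)

lemma wf_tens_tneg: "graded_vs sA Ad \<Longrightarrow> wf_tens Ad G x \<Longrightarrow> wf_tens Ad G (tneg x)"
  using graded_neg unfolding wf_tens_def tneg_def by (fastforce split: prod.splits)

lemma tens_eval_tneg:
  assumes "\<And>a w. \<beta> (- a) w = - \<beta> a w"
  shows "tens_eval \<beta> (tneg x) = - tens_eval \<beta> x"
  unfolding tneg_def tens_eval_eq_sum_list map_map sum_list_negf[symmetric]
  by (rule sum_list_map_cong) (auto simp: assms split: prod.splits)

definition contract :: "(rat \<Rightarrow> 'a::ab_group_add \<Rightarrow> 'a) \<Rightarrow> ('l \<Rightarrow> rat) \<Rightarrow> ('a, 'l) ftens \<Rightarrow> 'a" where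
  "contract sA \<zeta> x = sum_list (map (\<lambda>((i, a), (j, w)). sA (\<zeta> w) a) x)"

lemma contract_append [simp]: "contract sA \<zeta> (x @ y) = contract sA \<zeta> x + contract sA \<zeta> y"
  by (simp add: contract_def)

lemma linear_contract:
  assumes "Vector_Spaces.linear sA (*) f"
  shows "f (contract sA \<zeta> x) = tens_eval (\<lambda>a w. f a * \<zeta> w) x"
proof (induct x)
  case Nil
  then show ?case using linear_simps[OF assms] by (simp add: contract_def)
next
  case (Cons t x)
  then show ?case
    using linear_simps[OF assms] by (cases t) (auto simp: contract_def tens_eval_Cons mult.commute)
qed

lemma contract_homogeneous:
  assumes "graded_vs sA Ad" "wf_tens Ad G x" "tdeg k x"
    and "\<And>w j. w \<in> G j \<Longrightarrow> j \<noteq> q \<Longrightarrow> \<zeta> w = 0"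
  shows "contract sA \<zeta> x \<in> Ad (nat (k - q))"
proof -
  have "sA (\<zeta> w) a \<in> Ad (nat (k - q))" if "((i, a), (j, w)) \<in> set x" for i a j w
  proof (cases "j = q")
    case True
    then have "i = nat (k - q)" using tdegD[OF assms(3) that] by simp
    then show ?thesis using graded_scale[OF assms(1)] wf_tensD[OF assms(2) that] by simp
  next
    case False
    then have "\<zeta> w = 0" using assms(4) wf_tensD[OF assms(2) that] by blast
    then show ?thesis using graded_zero[OF assms(1)] by (simp add: scale_simps[OF assms(1)])
  qed
  then show ?thesis
    unfolding contract_def by (intro graded_sum_list[OF assms(1)]) (auto split: prod.splits)
qed

definition center_part :: "(rat \<Rightarrow> 'l \<Rightarrow> 'l) \<Rightarrow> ('l \<Rightarrow> rat) \<Rightarrow> int \<Rightarrow> 'l \<Rightarrow> ('a, 'l) ftens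
   \<Rightarrow> ('a, 'l) ftens" where
  "center_part s \<zeta> q e x = map (\<lambda>((i, a), (j, w)). ((i, a), (q, s (\<zeta> w) e))) x"

lemma in_Aplus_center_part: "in_Aplus x \<Longrightarrow> in_Aplus (center_part s \<zeta> q e x)"
  unfolding in_Aplus_def center_part_def by (auto split: prod.splits)

lemma wf_tens_center_part:
  "graded_vs s G \<Longrightarrow> wf_tens Ad G x \<Longrightarrow> e \<in> G q \<Longrightarrow> wf_tens Ad G (center_part s \<zeta> q e x)"
  using graded_scale unfolding wf_tens_def center_part_def by (fastforce split: prod.splits)

lemma contract_center_part:
  "(\<And>c. \<zeta> (s c e) = c) \<Longrightarrow> contract sA \<zeta> (center_part s \<zeta> q e x) = contract sA \<zeta> x"
  unfolding contract_def center_part_def map_map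
  by (rule sum_list_map_cong) (auto split: prod.splits)

locale tensor_dgla =
  fixes sA :: "rat \<Rightarrow> 'a::ring \<Rightarrow> 'a" and Ad :: "nat \<Rightarrow> 'a set" and dA :: "'a \<Rightarrow> 'a"
    and s :: "rat \<Rightarrow> 'l::ab_group_add \<Rightarrow> 'l" and G :: "int \<Rightarrow> 'l set"
    and br :: "'l \<Rightarrow> 'l \<Rightarrow> 'l" and d :: "'l \<Rightarrow> 'l"
  assumes A_cdga: "cdga sA Ad dA" and L_dgla: "dgla s G br d"
begin

lemma graded_A: "graded_vs sA Ad"
  using A_cdga by (simp add: cdga_def)

lemma graded_L: "graded_vs s G"
  using L_dgla by (simp add: dgla_def)

lemma vector_space_A: "vector_space sA"
  using graded_vector_space[OF graded_A] .

lemma vector_space_L: "vector_space s"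
  using graded_vector_space[OF graded_L] .

lemmas scaleA_simps = scale_simps[OF graded_A]
lemmas scaleL_simps = scale_simps[OF graded_L]

lemma A_scale_mult: "sA c (x * y) = sA c x * y" "sA c (x * y) = x * sA c y"
  using A_cdga unfolding cdga_def by blast+

lemma A_mult_graded: "x \<in> Ad i \<Longrightarrow> y \<in> Ad j \<Longrightarrow> x * y \<in> Ad (i + j)"
  using A_cdga unfolding cdga_def by blast

lemma A_commute: "x \<in> Ad i \<Longrightarrow> y \<in> Ad j \<Longrightarrow> x * y = sA (pm (int i * int j)) (y * x)"
  using A_cdga unfolding cdga_def by blast

lemma dA_linear: "Vector_Spaces.linear sA sA dA"
  using A_cdga unfolding cdga_def by blast

lemma dA_graded: "x \<in> Ad i \<Longrightarrow> dA x \<in> Ad (Suc i)"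
  using A_cdga unfolding cdga_def by blast

lemma dA_dA: "dA (dA x) = 0"
  using A_cdga unfolding cdga_def by blast

lemma dA_mult: "x \<in> Ad i \<Longrightarrow> dA (x * y) = dA x * y + sA (pm (int i)) (x * dA y)"
  using A_cdga unfolding cdga_def by blast

lemmas dA_simps = linear_simps[OF dA_linear]

lemma br_bilinear: "bilinear_map s s s br"
  using L_dgla unfolding dgla_def by blast

lemma br_graded: "x \<in> G i \<Longrightarrow> y \<in> G j \<Longrightarrow> br x y \<in> G (i + j)"
  using L_dgla unfolding dgla_def by blast

lemma br_antisym: "x \<in> G i \<Longrightarrow> y \<in> G j \<Longrightarrow> br x y = - s (pm (i * j)) (br y x)"
  using L_dgla unfolding dgla_def by blast

lemma jacobi: "x \<in> G i \<Longrightarrow> y \<in> G j \<Longrightarrow> z \<in> G k \<Longrightarrow>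
    s (pm (i * k)) (br x (br y z)) + s (pm (j * i)) (br y (br z x))
      + s (pm (k * j)) (br z (br x y)) = 0"
  using L_dgla unfolding dgla_def by blast

lemma d_linear: "Vector_Spaces.linear s s d"
  using L_dgla unfolding dgla_def by blast

lemma d_graded: "x \<in> G i \<Longrightarrow> d x \<in> G (i + 1)"
  using L_dgla unfolding dgla_def by blast

lemma d_d: "d (d x) = 0"
  using L_dgla unfolding dgla_def by blast

lemma d_br: "x \<in> G i \<Longrightarrow> d (br x y) = br (d x) y + s (pm i) (br x (d y))"
  using L_dgla unfolding dgla_def by blast

lemmas d_simps = linear_simps[OF d_linear]

lemma br_linear_left: "Vector_Spaces.linear s s (\<lambda>x. br x y)"
  using br_bilinear by (simp add: bilinear_map_def)

lemma br_linear_right: "Vector_Spaces.linear s s (br x)"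
  using br_bilinear by (simp add: bilinear_map_def)

lemmas br_left_simps = linear_simps[OF br_linear_left]
lemmas br_right_simps = linear_simps[OF br_linear_right]

text \<open>Koszul signs, extended linearly from homogeneous elements: \<open>parityA a = (-1)^|a| a\<close>,
  and \<open>twistA j a = (-1)^(j |a|) a\<close> is the sign of moving \<open>a\<close> past an element of degree \<open>j\<close>.\<close>

definition parityA :: "'a \<Rightarrow> 'a" where
  "parityA = graded_rescale sA Ad (\<lambda>i. pm (int i))"

definition parityL :: "'l \<Rightarrow> 'l" where
  "parityL = graded_rescale s G pm"

lemma parityA_homogeneous: "a \<in> Ad i \<Longrightarrow> parityA a = sA (pm (int i)) a"
  unfolding parityA_def using graded_rescale_homogeneous[OF graded_A] .

lemma parityL_homogeneous: "w \<in> G j \<Longrightarrow> parityL w = s (pm j) w"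
  unfolding parityL_def using graded_rescale_homogeneous[OF graded_L] .

lemma parityA_linear: "Vector_Spaces.linear sA sA parityA"
  unfolding parityA_def using graded_rescale_linear[OF graded_A] .

lemma parityL_linear: "Vector_Spaces.linear s s parityL"
  unfolding parityL_def using graded_rescale_linear[OF graded_L] .

lemmas parityA_simps = linear_simps[OF parityA_linear]

definition twistA :: "int \<Rightarrow> 'a \<Rightarrow> 'a" where
  "twistA j a = (if even j then a else parityA a)"

definition twistL :: "nat \<Rightarrow> 'l \<Rightarrow> 'l" where
  "twistL i w = (if even i then w else parityL w)"

lemma twistA_homogeneous: "a \<in> Ad i \<Longrightarrow> twistA j a = sA (pm (j * int i)) a"
  by (auto simp: twistA_def parityA_homogeneous pm_mult scaleA_simps scale_minus_one[OF graded_A]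
      pm_def)

lemma twistL_homogeneous: "w \<in> G j \<Longrightarrow> twistL i w = s (pm (j * int i)) w"
  by (auto simp: twistL_def parityL_homogeneous pm_mult scaleL_simps scale_minus_one[OF graded_L]
      pm_def)

lemma twistA_linear: "Vector_Spaces.linear sA sA (twistA j)"
  using parityA_linear vector_space.linear_id[OF vector_space_A]
  by (cases "even j") (simp_all add: twistA_def[abs_def] id_def)

lemma twistL_linear: "Vector_Spaces.linear s s (twistL i)"
  using parityL_linear vector_space.linear_id[OF vector_space_L]
  by (cases "even i") (simp_all add: twistL_def[abs_def] id_def)

lemmas twistA_simps = linear_simps[OF twistA_linear]
lemmas twistL_simps = linear_simps[OF twistL_linear]

abbreviation bil :: "('a \<Rightarrow> 'l \<Rightarrow> rat) \<Rightarrow> bool" where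
  "bil \<beta> \<equiv> bilinear_map sA s (*) \<beta>"

lemma bil_simps:
  assumes "bil \<beta>"
  shows "\<beta> (sA c a) w = c * \<beta> a w" "\<beta> (a + b) w = \<beta> a w + \<beta> b w" "\<beta> 0 w = 0"
    "\<beta> (- a) w = - \<beta> a w" "\<beta> (a - b) w = \<beta> a w - \<beta> b w"
    "\<beta> a (s c w) = c * \<beta> a w" "\<beta> a (w + v) = \<beta> a w + \<beta> a v" "\<beta> a 0 = 0"
    "\<beta> a (- w) = - \<beta> a w" "\<beta> a (w - v) = \<beta> a w - \<beta> a v"
proof -
  have l1: "Vector_Spaces.linear sA (*) (\<lambda>a. \<beta> a w)" for w
    using assms by (simp add: bilinear_map_def)
  have l2: "Vector_Spaces.linear s (*) (\<beta> a)" for a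
    using assms by (simp add: bilinear_map_def)
  show "\<beta> (sA c a) w = c * \<beta> a w" "\<beta> (a + b) w = \<beta> a w + \<beta> b w" "\<beta> 0 w = 0"
    "\<beta> (- a) w = - \<beta> a w" "\<beta> (a - b) w = \<beta> a w - \<beta> b w"
    using linear_simps[OF l1[of w]] by auto
  show "\<beta> a (s c w) = c * \<beta> a w" "\<beta> a (w + v) = \<beta> a w + \<beta> a v" "\<beta> a 0 = 0"
    "\<beta> a (- w) = - \<beta> a w" "\<beta> a (w - v) = \<beta> a w - \<beta> a v"
    using linear_simps[OF l2[of a]] by auto
qed

lemma bilI:
  assumes "\<And>a b w. \<beta> (a + b) w = \<beta> a w + \<beta> b w" "\<And>c a w. \<beta> (sA c a) w = c * \<beta> a w"
    "\<And>a w v. \<beta> a (w + v) = \<beta> a w + \<beta> a v" "\<And>c a w. \<beta> a (s c w) = c * \<beta> a w"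
  shows "bil \<beta>"
  unfolding bilinear_map_def
  using assms vector_space_A vector_space_L vector_space_rat_mult
  by (auto intro!: linearI_vector_space)

abbreviation TD where "TD x \<equiv> tdiff sA dA d x"
abbreviation TB where "TB x y \<equiv> tbr sA br x y"
abbreviation MC where "MC x \<equiv> MC_F sA dA br d x"

lemma teq_tens_evalD: "teq sA s x y \<Longrightarrow> bil \<beta> \<Longrightarrow> tens_eval \<beta> x = tens_eval \<beta> y"
  by (simp add: teq_def)

text \<open>Evaluating \<open>d x\<close>, or \<open>[x, y]\<close> with one argument fixed, against a bilinear form is the
  same as evaluating \<open>x\<close> against another bilinear form; hence both operations respect \<open>teq\<close>.\<close>

lemma tens_eval_tdiff_eq:
  assumes "wf_tens Ad G x" "bil \<beta>"
  shows "tens_eval \<beta> (TD x) = tens_eval (\<lambda>a w. \<beta> (dA a) w + \<beta> (parityA a) (d w)) x"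
  unfolding tens_eval_tdiff unfolding tens_eval_eq_sum_list
proof (rule sum_list_map_cong)
  fix t assume "t \<in> set x"
  then obtain i a j w where t: "t = ((i, a), (j, w))" and aw: "a \<in> Ad i"
    using wf_tensD[OF assms(1)] by (metis prod.collapse)
  show "entry_eval \<beta> (entry_dA dA t) + entry_eval \<beta> (entry_dL sA d t)
      = entry_eval (\<lambda>a w. \<beta> (dA a) w + \<beta> (parityA a) (d w)) t"
    using aw by (simp add: t parityA_homogeneous)
qed

lemma bil_tdiff_form: "bil \<beta> \<Longrightarrow> bil (\<lambda>a w. \<beta> (dA a) w + \<beta> (parityA a) (d w))"
  by (rule bilI) (auto simp: bil_simps dA_simps parityA_simps d_simps algebra_simps)

lemma teq_tdiff:
  assumes "wf_tens Ad G x" "wf_tens Ad G x'" "teq sA s x x'"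
  shows "teq sA s (TD x) (TD x')"
  unfolding teq_def
  using tens_eval_tdiff_eq[OF assms(1)] tens_eval_tdiff_eq[OF assms(2)] bil_tdiff_form
    teq_tens_evalD[OF assms(3)]
  by auto

definition br_form_left :: "('a \<Rightarrow> 'l \<Rightarrow> rat) \<Rightarrow> ('a, 'l) tentry \<Rightarrow> 'a \<Rightarrow> 'l \<Rightarrow> rat" where
  "br_form_left \<beta> t2 = (\<lambda>a1 w1. case t2 of ((i2, a2), (j2, w2)) \<Rightarrow> \<beta> (a1 * a2) (br (twistL i2 w1) w2))"

definition br_form_right :: "('a \<Rightarrow> 'l \<Rightarrow> rat) \<Rightarrow> ('a, 'l) tentry \<Rightarrow> 'a \<Rightarrow> 'l \<Rightarrow> rat" where
  "br_form_right \<beta> t1 = (\<lambda>a2 w2. case t1 of ((i1, a1), (j1, w1)) \<Rightarrow> \<beta> (a1 * twistA j1 a2) (br w1 w2))"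

lemma bil_br_form_left: "bil \<beta> \<Longrightarrow> bil (br_form_left \<beta> t2)"
  unfolding br_form_left_def
  by (cases t2, rule bilI)
    (auto simp: bil_simps twistL_simps br_left_simps A_scale_mult(1)[symmetric] distrib_right)

lemma bil_br_form_right: "bil \<beta> \<Longrightarrow> bil (br_form_right \<beta> t1)"
  unfolding br_form_right_def
  by (cases t1, rule bilI)
    (auto simp: bil_simps twistA_simps br_right_simps A_scale_mult(2)[symmetric] distrib_left)

lemma tens_eval_tbr_left:
  assumes "wf_tens Ad G x" "wf_tens Ad G y" "bil \<beta>"
  shows "tens_eval \<beta> (TB x y) = (\<Sum>t2\<leftarrow>y. tens_eval (br_form_left \<beta> t2) x)"
proof -
  have "entry_eval \<beta> (entry_br sA br t1 t2) = entry_eval (br_form_left \<beta> t2) t1"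
    if "t1 \<in> set x" "t2 \<in> set y" for t1 t2
  proof -
    obtain i1 a1 j1 w1 i2 a2 j2 w2 where t: "t1 = ((i1, a1), (j1, w1))" "t2 = ((i2, a2), (j2, w2))"
      by (metis prod.collapse)
    then have "w1 \<in> G j1" using wf_tensD[OF assms(1)] that(1) by blast
    then show ?thesis
      by (simp add: t br_form_left_def twistL_homogeneous br_left_simps bil_simps[OF assms(3)])
  qed
  then show ?thesis
    unfolding tens_eval_tbr unfolding tens_eval_eq_sum_list
    by (subst sum_list_swap) (intro sum_list_map_cong, blast)
qed

lemma tens_eval_tbr_right:
  assumes "wf_tens Ad G x" "wf_tens Ad G y" "bil \<beta>"
  shows "tens_eval \<beta> (TB x y) = (\<Sum>t1\<leftarrow>x. tens_eval (br_form_right \<beta> t1) y)"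
proof -
  have "entry_eval \<beta> (entry_br sA br t1 t2) = entry_eval (br_form_right \<beta> t1) t2"
    if "t1 \<in> set x" "t2 \<in> set y" for t1 t2
  proof -
    obtain i1 a1 j1 w1 i2 a2 j2 w2 where t: "t1 = ((i1, a1), (j1, w1))" "t2 = ((i2, a2), (j2, w2))"
      by (metis prod.collapse)
    then have "a2 \<in> Ad i2" using wf_tensD[OF assms(2)] that(2) by blast
    then show ?thesis
      by (simp add: t br_form_right_def twistA_homogeneous A_scale_mult(2)[symmetric]
          bil_simps[OF assms(3)])
  qed
  then show ?thesis
    unfolding tens_eval_tbr unfolding tens_eval_eq_sum_list by (intro sum_list_map_cong) blast
qed

lemma tens_eval_tbr_teq:
  assumes "wf_tens Ad G x" "wf_tens Ad G x'" "wf_tens Ad G y" "wf_tens Ad G y'"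
    and "teq sA s x x'" "teq sA s y y'" "bil \<beta>"
  shows "tens_eval \<beta> (TB x y) = tens_eval \<beta> (TB x' y')"
proof -
  have "tens_eval \<beta> (TB x y) = (\<Sum>t2\<leftarrow>y. tens_eval (br_form_left \<beta> t2) x)"
    using tens_eval_tbr_left[OF assms(1,3,7)] .
  also have "\<dots> = (\<Sum>t2\<leftarrow>y. tens_eval (br_form_left \<beta> t2) x')"
    by (rule sum_list_map_cong) (rule teq_tens_evalD[OF assms(5) bil_br_form_left[OF assms(7)]])
  also have "\<dots> = tens_eval \<beta> (TB x' y)"
    using tens_eval_tbr_left[OF assms(2,3,7)] by simp
  also have "\<dots> = (\<Sum>t1\<leftarrow>x'. tens_eval (br_form_right \<beta> t1) y)"
    using tens_eval_tbr_right[OF assms(2,3,7)] .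
  also have "\<dots> = (\<Sum>t1\<leftarrow>x'. tens_eval (br_form_right \<beta> t1) y')"
    by (rule sum_list_map_cong) (rule teq_tens_evalD[OF assms(6) bil_br_form_right[OF assms(7)]])
  also have "\<dots> = tens_eval \<beta> (TB x' y')"
    using tens_eval_tbr_right[OF assms(2,4,7)] by simp
  finally show ?thesis .
qed

lemma tens_eval_half: "bil \<beta> \<Longrightarrow> tens_eval \<beta> (map (entry_half sA) z) = 1/2 * tens_eval \<beta> z"
  unfolding tens_eval_eq_sum_list map_map sum_list_const_mult[symmetric]
  by (rule sum_list_map_cong) (auto simp: entry_half_def bil_simps split: prod.splits)

lemma tens_eval_MC_F: "bil \<beta> \<Longrightarrow> tens_eval \<beta> (MC x) = tens_eval \<beta> (TD x) + 1/2 * tens_eval \<beta> (TB x x)"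
  by (simp add: MC_F_eq tens_eval_half)

lemma wf_tens_tdiff: "wf_tens Ad G x \<Longrightarrow> wf_tens Ad G (TD x)"
  unfolding wf_tens_def tdiff_eq_concat
  by (fastforce simp: dA_graded d_graded graded_scale[OF graded_A] split: prod.splits)

lemma wf_tens_tbr: "wf_tens Ad G x \<Longrightarrow> wf_tens Ad G y \<Longrightarrow> wf_tens Ad G (TB x y)"
  unfolding wf_tens_def tbr_eq_concat
  by (fastforce simp: A_mult_graded br_graded graded_scale[OF graded_A] split: prod.splits)

lemma wf_tens_half: "wf_tens Ad G x \<Longrightarrow> wf_tens Ad G (map (entry_half sA) x)"
  unfolding wf_tens_def entry_half_def by (fastforce simp: graded_scale[OF graded_A] split: prod.splits)

lemma wf_tens_MC_F: "wf_tens Ad G x \<Longrightarrow> wf_tens Ad G (MC x)"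
  by (simp add: MC_F_eq wf_tens_tdiff wf_tens_tbr wf_tens_half)

lemma tdeg_tdiff: "tdeg k x \<Longrightarrow> tdeg (k + 1) (TD x)"
  unfolding tdeg_def tdiff_eq_concat by (fastforce split: prod.splits)

lemma tdeg_tbr: "tdeg k x \<Longrightarrow> tdeg l y \<Longrightarrow> tdeg (k + l) (TB x y)"
  unfolding tdeg_def tbr_eq_concat by (fastforce split: prod.splits)

lemma tdeg_half: "tdeg k x \<Longrightarrow> tdeg k (map (entry_half sA) x)"
  unfolding tdeg_def entry_half_def by (fastforce split: prod.splits)

lemma tdeg_MC_F: "tdeg 1 x \<Longrightarrow> tdeg 2 (MC x)"
  using tdeg_tdiff[of 1 x] tdeg_tbr[of 1 x 1 x] tdeg_half by (simp add: MC_F_eq)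

lemma teq_MC_F:
  assumes "wf_tens Ad G x" "wf_tens Ad G x'" "teq sA s x x'"
  shows "teq sA s (MC x) (MC x')"
  unfolding teq_def
proof (intro allI impI)
  fix \<beta> assume b: "bil \<beta>"
  show "tens_eval \<beta> (MC x) = tens_eval \<beta> (MC x')"
    using tens_eval_MC_F[OF b] teq_tens_evalD[OF teq_tdiff[OF assms] b]
      tens_eval_tbr_teq[OF assms(1,2,1,2,3,3) b]
    by simp
qed

lemma tens_eval_tdiff_tdiff:
  assumes "wf_tens Ad G x" "bil \<beta>"
  shows "tens_eval \<beta> (TD (TD x)) = 0"
  unfolding tens_eval_tdiff unfolding tdiff_eq_concat sum_list_map_concat map_map o_def
proof (rule sum_list_map_zero)
  fix t assume "t \<in> set x"
  obtain i a j w where t: "t = ((i, a), (j, w))"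
    by (metis prod.collapse)
  show "(\<Sum>s\<leftarrow>[entry_dA dA t, entry_dL sA d t].
      entry_eval \<beta> (entry_dA dA s) + entry_eval \<beta> (entry_dL sA d s)) = 0"
    by (simp add: t bil_simps[OF assms(2)] dA_dA d_d dA_simps pm_Suc pm_add pm_1)
qed

lemma tens_eval_tdiff_half:
  "bil \<beta> \<Longrightarrow> tens_eval \<beta> (TD (map (entry_half sA) z)) = 1/2 * tens_eval \<beta> (TD z)"
  unfolding tens_eval_tdiff map_map sum_list_const_mult[symmetric]
  by (rule sum_list_map_cong)
    (auto simp: entry_half_def bil_simps dA_simps scaleA_simps split: prod.splits)

lemma tens_eval_tbr_half:
  "bil \<beta> \<Longrightarrow> tens_eval \<beta> (TB (map (entry_half sA) z) y) = 1/2 * tens_eval \<beta> (TB z y)"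
  unfolding tens_eval_tbr map_map sum_list_const_mult[symmetric] o_def
  by (rule sum_list_map_cong)+
    (auto simp: entry_half_def bil_simps A_scale_mult(1)[symmetric] scaleA_simps mult.commute
      split: prod.splits)

lemma tens_eval_tbr_central:
  assumes "\<And>i a j w i' a' j' w'.
      ((i, a), (j, w)) \<in> set u \<Longrightarrow> ((i', a'), (j', w')) \<in> set x \<Longrightarrow> br w w' = 0"
    and "bil \<beta>"
  shows "tens_eval \<beta> (TB u x) = 0"
  unfolding tens_eval_tbr
  by (intro sum_list_map_zero) (use assms in \<open>fastforce simp: bil_simps split: prod.splits\<close>)

lemma entry_leibniz:
  assumes "bil \<beta>" "a1 \<in> Ad i1" "w1 \<in> G j1" "a2 \<in> Ad i2" "w2 \<in> G j2" "int i1 + j1 = 1"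
  shows "entry_eval \<beta> (entry_dA dA (entry_br sA br ((i1, a1), (j1, w1)) ((i2, a2), (j2, w2))))
       + entry_eval \<beta> (entry_dL sA d (entry_br sA br ((i1, a1), (j1, w1)) ((i2, a2), (j2, w2))))
     = entry_eval \<beta> (entry_br sA br (entry_dA dA ((i1, a1), (j1, w1))) ((i2, a2), (j2, w2)))
       + entry_eval \<beta> (entry_br sA br (entry_dL sA d ((i1, a1), (j1, w1))) ((i2, a2), (j2, w2)))
       - entry_eval \<beta> (entry_br sA br ((i1, a1), (j1, w1)) (entry_dA dA ((i2, a2), (j2, w2))))
       - entry_eval \<beta> (entry_br sA br ((i1, a1), (j1, w1)) (entry_dL sA d ((i2, a2), (j2, w2))))"
proof -
  have j1: "j1 = 1 - int i1" using assms(6) by simp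
  show ?thesis
    using assms(2-5)
    apply (simp add: bil_simps[OF assms(1)] dA_simps d_simps dA_mult d_br A_scale_mult[symmetric]
        scaleA_simps scaleL_simps br_left_simps br_right_simps algebra_simps)
    apply (simp add: j1 pm_def)
    done
qed

lemma tens_eval_tdiff_tbr:
  assumes "wf_tens Ad G x" "wf_tens Ad G y" "tdeg 1 x" "bil \<beta>"
  shows "tens_eval \<beta> (TD (TB x y)) = tens_eval \<beta> (TB (TD x) y) - tens_eval \<beta> (TB x (TD y))"
proof -
  let ?e = "entry_eval \<beta>" and ?b = "entry_br sA br" and ?dA = "entry_dA dA" and ?dL = "entry_dL sA d"
  have lhs: "tens_eval \<beta> (TD (TB x y))
      = (\<Sum>t1\<leftarrow>x. \<Sum>t2\<leftarrow>y. ?e (?dA (?b t1 t2)) + ?e (?dL (?b t1 t2)))"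
    by (simp add: tens_eval_tdiff tbr_eq_concat sum_list_map_concat o_def)
  have rhs1: "tens_eval \<beta> (TB (TD x) y)
      = (\<Sum>t1\<leftarrow>x. (\<Sum>t2\<leftarrow>y. ?e (?b (?dA t1) t2)) + (\<Sum>t2\<leftarrow>y. ?e (?b (?dL t1) t2)))"
    by (simp add: tens_eval_tbr tdiff_eq_concat sum_list_map_concat o_def)
  have rhs2: "tens_eval \<beta> (TB x (TD y))
      = (\<Sum>t1\<leftarrow>x. \<Sum>t2\<leftarrow>y. ?e (?b t1 (?dA t2)) + ?e (?b t1 (?dL t2)))"
    by (simp add: tens_eval_tbr tdiff_eq_concat sum_list_map_concat o_def)
  have "?e (?dA (?b t1 t2)) + ?e (?dL (?b t1 t2))
      = ?e (?b (?dA t1) t2) + ?e (?b (?dL t1) t2) - (?e (?b t1 (?dA t2)) + ?e (?b t1 (?dL t2)))"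
    if t12: "t1 \<in> set x" "t2 \<in> set y" for t1 t2
  proof -
    obtain i1 a1 j1 w1 i2 a2 j2 w2 where t: "t1 = ((i1, a1), (j1, w1))" "t2 = ((i2, a2), (j2, w2))"
      and aw: "a1 \<in> Ad i1" "w1 \<in> G j1" "a2 \<in> Ad i2" "w2 \<in> G j2" "int i1 + j1 = 1"
      using wf_tens_tdeg_entryD[OF assms(1,3) t12(1)] wf_tensD[OF assms(2)] t12(2)
      by (metis prod.collapse)
    show ?thesis using entry_leibniz[OF assms(4) aw] unfolding t by simp
  qed
  then have "tens_eval \<beta> (TD (TB x y))
      = (\<Sum>t1\<leftarrow>x. (\<Sum>t2\<leftarrow>y. ?e (?b (?dA t1) t2)) + (\<Sum>t2\<leftarrow>y. ?e (?b (?dL t1) t2))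
          - (\<Sum>t2\<leftarrow>y. ?e (?b t1 (?dA t2)) + ?e (?b t1 (?dL t2))))"
    unfolding lhs sum_list_addf[symmetric] sum_list_subtractf[symmetric]
    by (intro sum_list_map_cong) blast
  also have "\<dots> = tens_eval \<beta> (TB (TD x) y) - tens_eval \<beta> (TB x (TD y))"
    unfolding rhs1 rhs2 by (simp only: sum_list_subtractf)
  finally show ?thesis .
qed

lemma entry_br_antisym:
  assumes "bil \<beta>" "ap \<in> Ad ip" "wp \<in> G jp" "as \<in> Ad is" "ws \<in> G js"
    and "int ip + jp = 1" "int is + js = 2"
  shows "entry_eval \<beta> (entry_br sA br ((ip, ap), (jp, wp)) ((is, as), (js, ws)))
     = - entry_eval \<beta> (entry_br sA br ((is, as), (js, ws)) ((ip, ap), (jp, wp)))"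
proof -
  have c1: "as * ap = sA (pm (int is * int ip)) (ap * as)" by (rule A_commute[OF assms(4,2)])
  have c2: "br ws wp = - s (pm (js * jp)) (br wp ws)" by (rule br_antisym[OF assms(5,3)])
  have j: "jp = 1 - int ip" "js = 2 - int is" using assms(6,7) by auto
  show ?thesis
    apply (simp add: c1 c2 bil_simps[OF assms(1)] scaleA_simps scaleL_simps)
    apply (simp add: j pm_def)
    done
qed

lemma tens_eval_tbr_antisym:
  assumes "wf_tens Ad G x" "tdeg 1 x" "wf_tens Ad G y" "tdeg 2 y" "bil \<beta>"
  shows "tens_eval \<beta> (TB x y) = - tens_eval \<beta> (TB y x)"
proof -
  have "tens_eval \<beta> (TB x y) = (\<Sum>t1\<leftarrow>x. \<Sum>t2\<leftarrow>y. - entry_eval \<beta> (entry_br sA br t2 t1))"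
    unfolding tens_eval_tbr
  proof (rule sum_list_map_cong, rule sum_list_map_cong)
    fix t1 t2 assume "t1 \<in> set x" "t2 \<in> set y"
    then obtain i1 a1 j1 w1 i2 a2 j2 w2 where t: "t1 = ((i1, a1), (j1, w1))" "t2 = ((i2, a2), (j2, w2))"
      and aw: "a1 \<in> Ad i1" "w1 \<in> G j1" "int i1 + j1 = 1" "a2 \<in> Ad i2" "w2 \<in> G j2" "int i2 + j2 = 2"
      using wf_tens_tdeg_entryD[OF assms(1,2)] wf_tens_tdeg_entryD[OF assms(3,4)] by metis
    show "entry_eval \<beta> (entry_br sA br t1 t2) = - entry_eval \<beta> (entry_br sA br t2 t1)"
      unfolding t by (rule entry_br_antisym[OF assms(5) aw(1,2,4,5,3,6)])
  qed
  also have "\<dots> = - tens_eval \<beta> (TB y x)"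
    unfolding tens_eval_tbr sum_list_negf by (subst sum_list_swap) simp
  finally show ?thesis .
qed

lemma entry_jacobi:
  assumes "bil \<beta>" "ap \<in> Ad ip" "wp \<in> G jp" "aq \<in> Ad iq" "wq \<in> G jq"
    and "ar \<in> Ad ir" "wr \<in> G jr" "int ip + jp = 1" "int iq + jq = 1" "int ir + jr = 1"
  defines "p \<equiv> ((ip, ap), (jp, wp))" and "r \<equiv> ((iq, aq), (jq, wq))" and "t \<equiv> ((ir, ar), (jr, wr))"
  shows "entry_eval \<beta> (entry_br sA br (entry_br sA br p r) t)
     + entry_eval \<beta> (entry_br sA br (entry_br sA br r t) p)
     + entry_eval \<beta> (entry_br sA br (entry_br sA br t p) r) = 0"
proof -
  have A1: "aq * ar * ap = sA (pm (int (iq + ir) * int ip)) (ap * aq * ar)"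
    using A_commute[OF A_mult_graded[OF assms(4,6)] assms(2)] by (simp add: mult.assoc)
  have A2: "ar * ap * aq = sA (pm (int ir * int (ip + iq))) (ap * aq * ar)"
    using A_commute[OF assms(6) A_mult_graded[OF assms(2,4)]] by (simp add: mult.assoc)
  have B1: "br (br wp wq) wr = - s (pm ((jp + jq) * jr)) (br wr (br wp wq))"
    by (rule br_antisym[OF br_graded[OF assms(3,5)] assms(7)])
  have B2: "br (br wq wr) wp = - s (pm ((jq + jr) * jp)) (br wp (br wq wr))"
    by (rule br_antisym[OF br_graded[OF assms(5,7)] assms(3)])
  have B3: "br (br wr wp) wq = - s (pm ((jr + jp) * jq)) (br wq (br wr wp))"
    by (rule br_antisym[OF br_graded[OF assms(7,3)] assms(5)])
  let ?P = "ap * aq * ar"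
  have J: "s (pm (jp * jr)) (br wp (br wq wr)) + s (pm (jq * jp)) (br wq (br wr wp))
          + s (pm (jr * jq)) (br wr (br wp wq)) = 0"
    by (rule jacobi[OF assms(3,5,7)])
  have JB: "pm (jp * jr) * \<beta> ?P (br wp (br wq wr)) + pm (jq * jp) * \<beta> ?P (br wq (br wr wp))
          + pm (jr * jq) * \<beta> ?P (br wr (br wp wq)) = 0"
    using arg_cong[OF J, of "\<beta> ?P"] by (simp add: bil_simps[OF assms(1)])
  have j: "jp = 1 - int ip" "jq = 1 - int iq" "jr = 1 - int ir" using assms(8-10) by auto
  show ?thesis
    unfolding p_def r_def t_def
    apply (simp add: A1 A2 B1 B2 B3 bil_simps[OF assms(1)] scaleA_simps scaleL_simps
        A_scale_mult(1)[symmetric])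
    using JB
    apply (simp add: j pm_def)
    apply (cases "even ip"; cases "even iq"; cases "even ir"; simp; linarith)
    done
qed

text \<open>Summing the graded Jacobi identity over the cyclic rotations of all triples of entries.\<close>

lemma tens_eval_jacobi:
  assumes "wf_tens Ad G x" "tdeg 1 x" "bil \<beta>"
  shows "tens_eval \<beta> (TB (TB x x) x) = 0"
proof -
  define T where "T p q r = entry_eval \<beta> (entry_br sA br (entry_br sA br p q) r)" for p q r
  have S: "tens_eval \<beta> (TB (TB x x) x) = (\<Sum>p\<leftarrow>x. \<Sum>q\<leftarrow>x. \<Sum>r\<leftarrow>x. T p q r)"
    unfolding tens_eval_tbr by (simp add: tbr_eq_concat sum_list_map_concat o_def T_def)
  have S2: "(\<Sum>p\<leftarrow>x. \<Sum>q\<leftarrow>x. \<Sum>r\<leftarrow>x. T q r p) = (\<Sum>p\<leftarrow>x. \<Sum>q\<leftarrow>x. \<Sum>r\<leftarrow>x. T p q r)"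
  proof -
    have "(\<Sum>p\<leftarrow>x. \<Sum>q\<leftarrow>x. \<Sum>r\<leftarrow>x. T q r p) = (\<Sum>q\<leftarrow>x. \<Sum>p\<leftarrow>x. \<Sum>r\<leftarrow>x. T q r p)"
      by (rule sum_list_swap)
    also have "\<dots> = (\<Sum>q\<leftarrow>x. \<Sum>r\<leftarrow>x. \<Sum>p\<leftarrow>x. T q r p)"
      by (rule sum_list_map_cong) (rule sum_list_swap)
    finally show ?thesis .
  qed
  have S3: "(\<Sum>p\<leftarrow>x. \<Sum>q\<leftarrow>x. \<Sum>r\<leftarrow>x. T r p q) = (\<Sum>p\<leftarrow>x. \<Sum>q\<leftarrow>x. \<Sum>r\<leftarrow>x. T p q r)"
  proof -
    have "(\<Sum>p\<leftarrow>x. \<Sum>q\<leftarrow>x. \<Sum>r\<leftarrow>x. T r p q) = (\<Sum>p\<leftarrow>x. \<Sum>r\<leftarrow>x. \<Sum>q\<leftarrow>x. T r p q)"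
      by (rule sum_list_map_cong) (rule sum_list_swap)
    also have "\<dots> = (\<Sum>r\<leftarrow>x. \<Sum>p\<leftarrow>x. \<Sum>q\<leftarrow>x. T r p q)"
      by (rule sum_list_swap)
    finally show ?thesis .
  qed
  have Z: "(\<Sum>p\<leftarrow>x. \<Sum>q\<leftarrow>x. \<Sum>r\<leftarrow>x. T p q r + T q r p + T r p q) = 0"
  proof (rule sum_list_map_zero, rule sum_list_map_zero, rule sum_list_map_zero)
    fix p q r assume "p \<in> set x" "q \<in> set x" "r \<in> set x"
    then obtain ip ap jp wp iq aq jq wq ir ar jr wr where
      t: "p = ((ip, ap), (jp, wp))" "q = ((iq, aq), (jq, wq))" "r = ((ir, ar), (jr, wr))"
      and aw: "ap \<in> Ad ip" "wp \<in> G jp" "int ip + jp = 1" "aq \<in> Ad iq" "wq \<in> G jq" "int iq + jq = 1"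
        "ar \<in> Ad ir" "wr \<in> G jr" "int ir + jr = 1"
      using wf_tens_tdeg_entryD[OF assms(1,2)] by metis
    show "T p q r + T q r p + T r p q = 0"
      unfolding T_def t by (rule entry_jacobi[OF assms(3) aw(1,2,4,5,7,8,3,6,9)])
  qed
  have "(\<Sum>p\<leftarrow>x. \<Sum>q\<leftarrow>x. \<Sum>r\<leftarrow>x. T p q r + T q r p + T r p q) =
     (\<Sum>p\<leftarrow>x. \<Sum>q\<leftarrow>x. \<Sum>r\<leftarrow>x. T p q r) + (\<Sum>p\<leftarrow>x. \<Sum>q\<leftarrow>x. \<Sum>r\<leftarrow>x. T q r p)
     + (\<Sum>p\<leftarrow>x. \<Sum>q\<leftarrow>x. \<Sum>r\<leftarrow>x. T r p q)"
    by (simp only: sum_list_addf)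
  then show ?thesis using S S2 S3 Z by simp
qed

lemma bianchi:
  assumes "wf_tens Ad G x" "tdeg 1 x" "bil \<beta>"
  shows "tens_eval \<beta> (TD (MC x)) = tens_eval \<beta> (TB (MC x) x)"
proof -
  have dx: "wf_tens Ad G (TD x)" "tdeg 2 (TD x)"
    using wf_tens_tdiff[OF assms(1)] tdeg_tdiff[OF assms(2)] by auto
  have "tens_eval \<beta> (TD (MC x)) = tens_eval \<beta> (TD (TD x)) + 1/2 * tens_eval \<beta> (TD (TB x x))"
    by (simp add: MC_F_eq tdiff_append tens_eval_tdiff_half[OF assms(3)])
  also have "\<dots> = 1/2 * (tens_eval \<beta> (TB (TD x) x) - tens_eval \<beta> (TB x (TD x)))"
    using tens_eval_tdiff_tdiff[OF assms(1,3)] tens_eval_tdiff_tbr[OF assms(1,1,2,3)] by simp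
  also have "\<dots> = tens_eval \<beta> (TB (TD x) x)"
    using tens_eval_tbr_antisym[OF assms(1,2) dx assms(3)] by simp
  also have "\<dots> = tens_eval \<beta> (TB (MC x) x)"
    using tens_eval_jacobi[OF assms]
    by (simp add: MC_F_eq tbr_append tens_eval_tbr_half[OF assms(3)])
  finally show ?thesis .
qed

lemma contract_tdiff:
  assumes "\<And>i a j w. ((i, a), (j, w)) \<in> set x \<Longrightarrow> d w = 0" "\<zeta> 0 = 0"
  shows "contract sA \<zeta> (TD x) = dA (contract sA \<zeta> x)"
  unfolding contract_def tdiff_eq_concat sum_list_map_concat map_map o_def
    linear_sum_list[OF dA_linear]
  by (rule sum_list_map_cong) (auto simp: assms dA_simps scaleA_simps split: prod.splits)

end

locale mc_product =
  fixes sA :: "rat \<Rightarrow> 'a::ring \<Rightarrow> 'a" and Ad :: "nat \<Rightarrow> 'a set" and dA :: "'a \<Rightarrow> 'a"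
    and sT :: "rat \<Rightarrow> 'l::ab_group_add \<Rightarrow> 'l" and GT :: "int \<Rightarrow> 'l set"
    and brT :: "'l \<Rightarrow> 'l \<Rightarrow> 'l" and dT :: "'l \<Rightarrow> 'l"
    and sL :: "rat \<Rightarrow> 'm::ab_group_add \<Rightarrow> 'm" and GL :: "int \<Rightarrow> 'm set"
    and brL :: "'m \<Rightarrow> 'm \<Rightarrow> 'm" and dL :: "'m \<Rightarrow> 'm"
    and \<pi> :: "'l \<Rightarrow> 'm" and q :: int and e :: 'l
  assumes A_cdga: "cdga sA Ad dA"
    and data: "mc_product_data sT GT brT dT sL GL brL dL \<pi> q e"
begin

lemma T_dgla: "dgla sT GT brT dT"
  and L_dgla: "dgla sL GL brL dL"
  and pi_hom: "dgla_hom sT GT brT dT sL GL brL dL \<pi>"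
  and surj_pi: "surj \<pi>"
  and br_kernel_right: "\<pi> z = 0 \<Longrightarrow> brT x z = 0"
  and d_kernel: "\<pi> z = 0 \<Longrightarrow> dT z = 0"
  and e_graded: "e \<in> GT q"
  and e_nonzero: "e \<noteq> 0"
  and kernel_eq: "{z. \<pi> z = 0} = range (\<lambda>c. sT c e)"
  using data unfolding mc_product_data_def by blast+

sublocale T: tensor_dgla sA Ad dA sT GT brT dT
  by (rule tensor_dgla.intro[OF A_cdga T_dgla])

sublocale L: tensor_dgla sA Ad dA sL GL brL dL
  by (rule tensor_dgla.intro[OF A_cdga L_dgla])

lemma pi_linear: "Vector_Spaces.linear sT sL \<pi>"
  and pi_graded: "x \<in> GT j \<Longrightarrow> \<pi> x \<in> GL j"
  and pi_br: "\<pi> (brT x y) = brL (\<pi> x) (\<pi> y)"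
  and pi_d: "\<pi> (dT x) = dL (\<pi> x)"
  using pi_hom unfolding dgla_hom_def by blast+

lemma kernel_iff: "\<pi> z = 0 \<longleftrightarrow> (\<exists>c. z = sT c e)"
  using kernel_eq by (metis (mono_tags, lifting) mem_Collect_eq rangeE rangeI)

lemma br_kernel_left:
  assumes "\<pi> z = 0" "w \<in> GT j"
  shows "brT z w = 0"
proof -
  obtain c where "z = sT c e" using assms(1) kernel_iff by blast
  then have "z \<in> GT q" using graded_scale[OF T.graded_L e_graded] by simp
  then show ?thesis using T.br_antisym[OF _ assms(2)] br_kernel_right[OF assms(1)] T.scaleL_simps
    by simp
qed

definition in_center :: "('a, 'l) ftens \<Rightarrow> bool" where
  "in_center x \<longleftrightarrow> (\<forall>(ia, (j, w)) \<in> set x. \<pi> w = 0)"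

lemma in_centerD: "in_center x \<Longrightarrow> ((i, a), (j, w)) \<in> set x \<Longrightarrow> \<pi> w = 0"
  unfolding in_center_def by fastforce

lemma in_AplusZ_iff: "in_AplusZ Ad GT \<pi> x \<longleftrightarrow> wf_tens Ad GT x \<and> in_Aplus x \<and> in_center x"
  by (simp add: in_AplusZ_def in_center_def)

lemma in_center_center_part: "in_center (center_part sT \<zeta> q e x)"
  unfolding in_center_def center_part_def using kernel_iff by auto

lemma tens_eval_tbr_center_left:
  "in_center z \<Longrightarrow> wf_tens Ad GT x \<Longrightarrow> T.bil \<beta> \<Longrightarrow> tens_eval \<beta> (tbr sA brT z x) = 0"
  by (rule T.tens_eval_tbr_central) (auto dest: in_centerD wf_tensD intro: br_kernel_left)

lemma tens_eval_tbr_center_right: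
  "in_center z \<Longrightarrow> T.bil \<beta> \<Longrightarrow> tens_eval \<beta> (tbr sA brT x z) = 0"
  by (rule T.tens_eval_tbr_central) (auto dest: in_centerD intro: br_kernel_right)

definition lift :: "'m \<Rightarrow> 'l" where
  "lift = (SOME \<sigma>. Vector_Spaces.linear sL sT \<sigma> \<and> (\<forall>m. \<pi> (\<sigma> m) = m))"

lemma lift: "Vector_Spaces.linear sL sT lift" "\<pi> (lift m) = m"
proof -
  have "\<exists>\<sigma>. Vector_Spaces.linear sL sT \<sigma> \<and> (\<forall>m. \<pi> (\<sigma> m) = m)"
    using vector_space_pair.linear_surjective_right_inverse[OF _ pi_linear surj_pi]
      T.vector_space_L L.vector_space_L by (auto simp: vector_space_pair_def fun_eq_iff)
  from someI_ex[OF this] show "Vector_Spaces.linear sL sT lift" "\<pi> (lift m) = m"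
    unfolding lift_def by blast+
qed

text \<open>The coefficient functional identifying \<open>Z = \<rat>e\<close> with \<open>\<rat>\<close>; it is chosen to vanish
  outside degree \<open>q\<close>, so that contracting with it respects degrees.\<close>

definition coef :: "'l \<Rightarrow> rat" where
  "coef = (SOME \<zeta>. Vector_Spaces.linear sT (*) \<zeta> \<and> \<zeta> e = 1 \<and>
     (\<forall>w j. w \<in> GT j \<longrightarrow> j \<noteq> q \<longrightarrow> \<zeta> w = 0))"

lemma
  shows coef_linear: "Vector_Spaces.linear sT (*) coef"
    and coef_e: "coef e = 1"
    and coef_off_degree: "w \<in> GT j \<Longrightarrow> j \<noteq> q \<Longrightarrow> coef w = 0"
proof -
  obtain \<zeta>0 where \<zeta>0: "Vector_Spaces.linear sT (*) \<zeta>0" "\<zeta>0 e = 1"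
    using linear_functional_exists[OF T.vector_space_L e_nonzero] by blast
  define \<zeta> where "\<zeta> = \<zeta>0 \<circ> graded_rescale sT GT (\<lambda>j. if j = q then 1 else 0)"
  have "Vector_Spaces.linear sT (*) \<zeta>"
    unfolding \<zeta>_def
    by (rule Vector_Spaces.linear_compose[OF graded_rescale_linear[OF T.graded_L] \<zeta>0(1)])
  moreover have "\<zeta> e = 1"
    unfolding \<zeta>_def using graded_rescale_homogeneous[OF T.graded_L e_graded] \<zeta>0(2) T.scaleL_simps
    by simp
  moreover have "\<zeta> w = 0" if "w \<in> GT j" "j \<noteq> q" for w j
    unfolding \<zeta>_def using graded_rescale_homogeneous[OF T.graded_L that(1)] that(2) T.scaleL_simps
      linear_simps(3)[OF \<zeta>0(1)] by simp
  ultimately have "\<exists>\<zeta>. Vector_Spaces.linear sT (*) \<zeta> \<and> \<zeta> e = 1 \<and>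
      (\<forall>w j. w \<in> GT j \<longrightarrow> j \<noteq> q \<longrightarrow> \<zeta> w = 0)"
    by blast
  from someI_ex[OF this]
  show "Vector_Spaces.linear sT (*) coef" "coef e = 1" "w \<in> GT j \<Longrightarrow> j \<noteq> q \<Longrightarrow> coef w = 0"
    unfolding coef_def by blast+
qed

lemma coef_scale_e: "coef (sT c e) = c"
  using linear_simps(2)[OF coef_linear] coef_e by simp

lemma lift_pi_mod_center: "\<exists>c. lift (\<pi> w) = w + sT c e"
proof -
  have "\<pi> (lift (\<pi> w) - w) = 0" using linear_simps(5)[OF pi_linear] lift(2) by simp
  then obtain c where "lift (\<pi> w) - w = sT c e" using kernel_iff by blast
  then show ?thesis by (metis add.commute diff_add_cancel)
qed

text \<open>If \<open>y\<close> vanishes after applying \<open>\<pi>\<close>, it equals its \<open>Z\<close>-part: every form \<open>\<beta>\<close> splits as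
  the part seen through \<open>coef\<close> plus a form factoring through \<open>\<pi>\<close>, namely \<open>\<beta>(a, w - coef(w) e)\<close>,
  which is invariant under changing \<open>w\<close> by multiples of \<open>e\<close>.\<close>

lemma teq_center_part:
  assumes "\<And>\<beta>'. L.bil \<beta>' \<Longrightarrow> tens_eval \<beta>' (tmap \<pi> y) = 0"
  shows "teq sA sT y (center_part sT coef q e y)"
  unfolding teq_def
proof (intro allI impI)
  fix \<beta> assume b: "T.bil \<beta>"
  define P where "P w = w - sT (coef w) e" for w
  have P_lift: "P (lift (\<pi> w)) = P w" for w
    using lift_pi_mod_center[of w] linear_simps(1)[OF coef_linear] coef_scale_e T.scaleL_simps
    by (auto simp: P_def)
  define \<beta>' where "\<beta>' a m = \<beta> a (P (lift m))" for a m
  have b': "L.bil \<beta>'"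
    unfolding \<beta>'_def P_def
    by (rule L.bilI) (auto simp: T.bil_simps[OF b] linear_simps[OF lift(1)] linear_simps[OF coef_linear]
        T.scaleL_simps algebra_simps)
  have split: "\<beta> a w = \<beta> a (sT (coef w) e) + \<beta>' a (\<pi> w)" for a w
    unfolding \<beta>'_def P_lift unfolding P_def by (simp add: T.bil_simps[OF b])
  have "tens_eval \<beta> y = tens_eval \<beta> (center_part sT coef q e y) + tens_eval \<beta>' (tmap \<pi> y)"
    unfolding tens_eval_tmap unfolding center_part_def tens_eval_eq_sum_list map_map o_def
      sum_list_addf[symmetric]
    by (rule sum_list_map_cong) (clarsimp split: prod.splits, rule split)
  then show "tens_eval \<beta> y = tens_eval \<beta> (center_part sT coef q e y)"
    using assms[OF b'] by simp
qed

lemma bil_coef_form: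
  assumes "Vector_Spaces.linear sA (*) f"
  shows "T.bil (\<lambda>a w. f a * coef w)"
  by (rule T.bilI) (simp_all add: linear_simps[OF assms] linear_simps[OF coef_linear] distrib_left
      distrib_right mult.assoc)

lemma contract_teq:
  assumes "teq sA sT x y"
  shows "contract sA coef x = contract sA coef y"
  by (rule linear_functionals_separate[OF T.vector_space_A])
    (simp add: linear_contract T.teq_tens_evalD[OF assms bil_coef_form])

lemma phiZ_eq_contract:
  assumes "in_center u"
  shows "phiZ sA sT e u = contract sA coef u"
proof -
  have "zcoef sT e w = coef w" if w: "\<pi> w = 0" for w
  proof -
    obtain c where c: "w = sT c e" using w kernel_iff by blast
    have "zcoef sT e w = c" unfolding zcoef_def
    proof (rule the_equality)
      fix c' assume "w = sT c' e"
      then show "c' = c"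
        using c vector_space.scale_right_imp_eq[OF T.vector_space_L e_nonzero] by simp
    qed (rule c)
    then show ?thesis using c coef_scale_e by simp
  qed
  then show ?thesis
    unfolding phiZ_def contract_def
    by (intro sum_list_map_cong) (use in_centerD[OF assms] in \<open>auto split: prod.splits\<close>)
qed

lemma phiZ_eq_contract_teq:
  assumes "in_center u" "teq sA sT u y"
  shows "phiZ sA sT e u = contract sA coef y"
  using assms by (simp add: phiZ_eq_contract contract_teq)

lemma contract_MC_F_graded:
  "wf_tens Ad GT x \<Longrightarrow> tdeg 1 x \<Longrightarrow> contract sA coef (T.MC x) \<in> Ad (nat (2 - q))"
  using contract_homogeneous[OF T.graded_A T.wf_tens_MC_F T.tdeg_MC_F coef_off_degree] by simp

lemma contract_tdiff_center: "in_center x \<Longrightarrow> contract sA coef (T.TD x) = dA (contract sA coef x)"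
  by (rule T.contract_tdiff) (auto dest: in_centerD d_kernel simp: linear_simps(3)[OF coef_linear])

text \<open>By Bianchi, \<open>d F(x) = [F(x), x]\<close>, which vanishes once \<open>F(x)\<close> is central.\<close>

lemma contract_MC_F_cocycle:
  assumes u: "wf_tens Ad GT u" "in_center u"
    and "teq sA sT u (T.MC x)" "wf_tens Ad GT x" "tdeg 1 x"
  shows "dA (contract sA coef u) = 0"
proof (rule linear_functionals_separate[OF T.vector_space_A])
  fix f :: "'a \<Rightarrow> rat" assume f: "Vector_Spaces.linear sA (*) f"
  let ?\<beta> = "\<lambda>a w. f a * coef w"
  have "f (dA (contract sA coef u)) = tens_eval ?\<beta> (T.TD u)"
    by (simp add: contract_tdiff_center[OF u(2), symmetric] linear_contract[OF f])
  also have "\<dots> = tens_eval ?\<beta> (T.TD (T.MC x))"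
    using T.teq_tdiff[OF u(1) T.wf_tens_MC_F[OF assms(4)] assms(3)] bil_coef_form[OF f]
    by (rule T.teq_tens_evalD)
  also have "\<dots> = tens_eval ?\<beta> (T.TB (T.MC x) x)"
    by (rule T.bianchi[OF assms(4,5) bil_coef_form[OF f]])
  also have "\<dots> = tens_eval ?\<beta> (T.TB u x)"
    using T.tens_eval_tbr_teq[OF T.wf_tens_MC_F[OF assms(4)] u(1) assms(4,4) teq_sym[OF assms(3)] _
        bil_coef_form[OF f]]
    by (simp add: teq_def)
  also have "\<dots> = 0"
    by (rule tens_eval_tbr_center_left[OF u(2) assms(4) bil_coef_form[OF f]])
  finally show "f (dA (contract sA coef u)) = f 0" using linear_simps(3)[OF f] by simp
qed

lemma teq_MC_F_append_center:
  assumes "wf_tens Ad GT x" "wf_tens Ad GT \<delta>" "in_center \<delta>"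
  shows "teq sA sT (T.MC (x @ \<delta>)) (T.MC x @ T.TD \<delta>)"
  unfolding teq_def
proof (intro allI impI)
  fix \<beta> assume b: "T.bil \<beta>"
  have "tens_eval \<beta> (T.TB x \<delta>) = 0" "tens_eval \<beta> (T.TB \<delta> x) = 0" "tens_eval \<beta> (T.TB \<delta> \<delta>) = 0"
    using tens_eval_tbr_center_right[OF assms(3) b] tens_eval_tbr_center_left[OF assms(3) _ b] assms(1,2)
    by blast+
  then show "tens_eval \<beta> (T.MC (x @ \<delta>)) = tens_eval \<beta> (T.MC x @ T.TD \<delta>)"
    by (simp add: T.tens_eval_MC_F[OF b] tdiff_append tbr_append tens_eval_tbr_append_right)
qed

end

locale mc_element = mc_product +
  fixes \<alpha>
  assumes alpha_wf: "wf_tens Ad GL \<alpha>"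
    and alpha_MC: "teq sA sL (MC_F sA dA brL dL \<alpha>) []"
begin

definition is_lift where
  "is_lift x \<longleftrightarrow> wf_tens Ad GT x \<and> in_Aplus x \<and> tdeg 1 x \<and> teq sA sL (tmap \<pi> x) \<alpha>"

lemma tens_eval_tmap_MC_F_lift:
  assumes "is_lift x" "L.bil \<beta>"
  shows "tens_eval \<beta> (tmap \<pi> (T.MC x)) = 0"
proof -
  have "tmap \<pi> (T.MC x) = L.MC (tmap \<pi> x)"
    by (rule tmap_MC_F) (simp_all add: pi_d pi_br)
  moreover have "teq sA sL (L.MC (tmap \<pi> x)) (L.MC \<alpha>)"
    using assms(1)
    by (intro L.teq_MC_F wf_tens_tmap[of GT \<pi> GL] alpha_wf) (simp_all add: is_lift_def pi_graded)
  ultimately show ?thesis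
    using L.teq_tens_evalD[OF _ assms(2)] L.teq_tens_evalD[OF alpha_MC assms(2)] by simp
qed

lemma MC_F_lift_in_AplusZ:
  assumes "is_lift x"
  shows "\<exists>u. in_AplusZ Ad GT \<pi> u \<and> teq sA sT u (T.MC x)"
proof (intro exI conjI)
  have x: "wf_tens Ad GT x" "in_Aplus x" using assms by (simp_all add: is_lift_def)
  show "in_AplusZ Ad GT \<pi> (center_part sT coef q e (T.MC x))"
    unfolding in_AplusZ_iff
    using wf_tens_center_part[OF T.graded_L T.wf_tens_MC_F[OF x(1)] e_graded]
      in_Aplus_center_part[OF in_Aplus_MC_F[OF x(2)]] in_center_center_part by blast
  show "teq sA sT (center_part sT coef q e (T.MC x)) (T.MC x)"
    by (rule teq_sym, rule teq_center_part, rule tens_eval_tmap_MC_F_lift[OF assms])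
qed

lemma lifts_differ_by_center:
  assumes "is_lift x" "is_lift x1"
  obtains \<delta> where "wf_tens Ad GT \<delta>" "in_center \<delta>" "teq sA sT x (x1 @ \<delta>)"
    and "contract sA coef \<delta> = contract sA coef (x @ tneg x1)"
proof (rule that)
  let ?d = "x @ tneg x1"
  have x: "wf_tens Ad GT x" "teq sA sL (tmap \<pi> x) \<alpha>"
    and x1: "wf_tens Ad GT x1" "teq sA sL (tmap \<pi> x1) \<alpha>"
    using assms by (simp_all add: is_lift_def)
  have d: "wf_tens Ad GT ?d"
    using x(1) x1(1) wf_tens_tneg[OF T.graded_A] by auto
  have d_center: "teq sA sT ?d (center_part sT coef q e ?d)"
  proof (rule teq_center_part)
    fix \<beta>' assume "L.bil \<beta>'"
    then show "tens_eval \<beta>' (tmap \<pi> ?d) = 0"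
      using L.teq_tens_evalD[OF x(2)] L.teq_tens_evalD[OF x1(2)] tens_eval_tneg[of \<beta>'] L.bil_simps(4)
      by (simp add: tmap_append tmap_tneg)
  qed
  show "teq sA sT x (x1 @ center_part sT coef q e ?d)"
    unfolding teq_def
  proof (intro allI impI)
    fix \<beta> assume b: "T.bil \<beta>"
    show "tens_eval \<beta> x = tens_eval \<beta> (x1 @ center_part sT coef q e ?d)"
      using T.teq_tens_evalD[OF d_center b] tens_eval_tneg[of \<beta> x1, OF T.bil_simps(4)[OF b]] by simp
  qed
  show "wf_tens Ad GT (center_part sT coef q e ?d)"
    by (rule wf_tens_center_part[OF T.graded_L d e_graded])
  show "in_center (center_part sT coef q e ?d)" by (rule in_center_center_part)
  show "contract sA coef (center_part sT coef q e ?d) = contract sA coef ?d"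
    by (rule contract_center_part) (rule coef_scale_e)
qed

lemma contract_MC_F_lift_cocycle:
  assumes "is_lift x"
  shows "dA (contract sA coef (T.MC x)) = 0"
proof -
  obtain u where u: "in_AplusZ Ad GT \<pi> u" "teq sA sT u (T.MC x)"
    using MC_F_lift_in_AplusZ[OF assms] by blast
  have "contract sA coef (T.MC x) = contract sA coef u"
    using contract_teq[OF u(2)] by simp
  then show ?thesis
    using contract_MC_F_cocycle[OF _ _ u(2)] u(1) assms by (simp add: in_AplusZ_iff is_lift_def)
qed

lemma contract_MC_F_lifts_cohomologous:
  assumes "is_lift x" "is_lift x1"
  shows "\<exists>b \<in> Ad (nat (1 - q)). contract sA coef (T.MC x) - contract sA coef (T.MC x1) = dA b"
proof -
  obtain \<delta> where \<delta>: "wf_tens Ad GT \<delta>" "in_center \<delta>" "teq sA sT x (x1 @ \<delta>)"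
    and \<delta>_contract: "contract sA coef \<delta> = contract sA coef (x @ tneg x1)"
    using lifts_differ_by_center[OF assms] by blast
  have x: "wf_tens Ad GT x" "tdeg 1 x" and x1: "wf_tens Ad GT x1" "tdeg 1 x1"
    using assms by (simp_all add: is_lift_def)
  have "contract sA coef (T.MC x) = contract sA coef (T.MC (x1 @ \<delta>))"
    using contract_teq[OF T.teq_MC_F[OF x(1) _ \<delta>(3)]] x1(1) \<delta>(1) by simp
  also have "\<dots> = contract sA coef (T.MC x1) + dA (contract sA coef \<delta>)"
    using contract_teq[OF teq_MC_F_append_center[OF x1(1) \<delta>(1,2)]] contract_tdiff_center[OF \<delta>(2)]
    by simp
  finally have "contract sA coef (T.MC x) - contract sA coef (T.MC x1) = dA (contract sA coef \<delta>)"
    by simp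
  moreover have "contract sA coef \<delta> \<in> Ad (nat (1 - q))"
    unfolding \<delta>_contract
    by (rule contract_homogeneous[OF T.graded_A _ _ coef_off_degree])
      (use x x1 wf_tens_tneg[OF T.graded_A] tdeg_tneg in auto)
  ultimately show ?thesis by blast
qed

end

theorem lemma3p4:
  fixes sA :: "rat \<Rightarrow> 'a::ring \<Rightarrow> 'a" and Ad :: "nat \<Rightarrow> 'a set" and dA :: "'a \<Rightarrow> 'a"
    and sT :: "rat \<Rightarrow> 'l::ab_group_add \<Rightarrow> 'l" and GT :: "int \<Rightarrow> 'l set"
    and brT :: "'l \<Rightarrow> 'l \<Rightarrow> 'l" and dT :: "'l \<Rightarrow> 'l"
    and sL :: "rat \<Rightarrow> 'm::ab_group_add \<Rightarrow> 'm" and GL :: "int \<Rightarrow> 'm set"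
    and brL :: "'m \<Rightarrow> 'm \<Rightarrow> 'm" and dL :: "'m \<Rightarrow> 'm"
    and \<pi> :: "'l \<Rightarrow> 'm" and q :: int and e :: 'l
    and \<alpha> :: "('a, 'm) ftens" and \<alpha>t \<alpha>t1 :: "('a, 'l) ftens"
  assumes A: "cdga sA Ad dA"
    and \<lambda>: "mc_product_data sT GT brT dT sL GL brL dL \<pi> q e"
    and \<alpha>_wf: "wf_tens Ad GL \<alpha>" and \<alpha>_pos: "in_Aplus \<alpha>" and \<alpha>_deg: "tdeg_one \<alpha>"
    and \<alpha>_MC: "teq sA sL (MC_F sA dA brL dL \<alpha>) []"
    and \<alpha>t_wf: "wf_tens Ad GT \<alpha>t" and \<alpha>t_pos: "in_Aplus \<alpha>t" and \<alpha>t_deg: "tdeg_one \<alpha>t"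
    and \<alpha>t_lift: "teq sA sL (tmap \<pi> \<alpha>t) \<alpha>"
    and \<alpha>t1_wf: "wf_tens Ad GT \<alpha>t1" and \<alpha>t1_pos: "in_Aplus \<alpha>t1" and \<alpha>t1_deg: "tdeg_one \<alpha>t1"
    and \<alpha>t1_lift: "teq sA sL (tmap \<pi> \<alpha>t1) \<alpha>"
  shows "(\<exists>u. in_AplusZ Ad GT \<pi> u \<and> teq sA sT u (MC_F sA dA brT dT \<alpha>t)) \<and>
         (\<exists>u1. in_AplusZ Ad GT \<pi> u1 \<and> teq sA sT u1 (MC_F sA dA brT dT \<alpha>t1)) \<and>
         (\<forall>u u1. in_AplusZ Ad GT \<pi> u \<longrightarrow> in_AplusZ Ad GT \<pi> u1 \<longrightarrow>
            teq sA sT u (MC_F sA dA brT dT \<alpha>t) \<longrightarrow> teq sA sT u1 (MC_F sA dA brT dT \<alpha>t1) \<longrightarrow>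
            phiZ sA sT e u \<in> Ad (nat (2 - q)) \<and> dA (phiZ sA sT e u) = 0 \<and>
            phiZ sA sT e u1 \<in> Ad (nat (2 - q)) \<and> dA (phiZ sA sT e u1) = 0 \<and>
            (\<exists>b \<in> Ad (nat (1 - q)). phiZ sA sT e u - phiZ sA sT e u1 = dA b))"
proof -
  interpret mc_element sA Ad dA sT GT brT dT sL GL brL dL \<pi> q e \<alpha>
    by (intro mc_element.intro mc_product.intro mc_element_axioms.intro A \<lambda> \<alpha>_wf \<alpha>_MC)
  have lifts: "is_lift \<alpha>t" "is_lift \<alpha>t1"
    using \<alpha>t_wf \<alpha>t_pos \<alpha>t_deg \<alpha>t_lift \<alpha>t1_wf \<alpha>t1_pos \<alpha>t1_deg \<alpha>t1_lift
    by (simp_all add: is_lift_def tdeg_one_eq)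
  show ?thesis
  proof (intro conjI allI impI)
    fix u u1
    assume "in_AplusZ Ad GT \<pi> u" "in_AplusZ Ad GT \<pi> u1"
      and "teq sA sT u (MC_F sA dA brT dT \<alpha>t)" "teq sA sT u1 (MC_F sA dA brT dT \<alpha>t1)"
    then have "phiZ sA sT e u = contract sA coef (MC_F sA dA brT dT \<alpha>t)"
      and "phiZ sA sT e u1 = contract sA coef (MC_F sA dA brT dT \<alpha>t1)"
      by (simp_all add: in_AplusZ_iff phiZ_eq_contract_teq)
    moreover have "contract sA coef (MC_F sA dA brT dT x) \<in> Ad (nat (2 - q))" if "is_lift x" for x
      using contract_MC_F_graded that by (simp add: is_lift_def)
    ultimately show "phiZ sA sT e u \<in> Ad (nat (2 - q))" "dA (phiZ sA sT e u) = 0"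
      "phiZ sA sT e u1 \<in> Ad (nat (2 - q))" "dA (phiZ sA sT e u1) = 0"
      "\<exists>b \<in> Ad (nat (1 - q)). phiZ sA sT e u - phiZ sA sT e u1 = dA b"
      using lifts contract_MC_F_lift_cocycle contract_MC_F_lifts_cohomologous by simp_all
  qed (use MC_F_lift_in_AplusZ lifts in blast)+
qed

end
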